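(* Let $\mathcal G=(G_n)$ be an expander sequence and let $I_t=I_t^{(pp)}$ for push\&pull on $G_n$ with transmission success probability $q\in(0,1]$, $U_t=V\setminus I_t$. (a) Let $|I_t|\le n/\log n$. Then $\mathbb E_t[|I_{t+1}\setminus I_t|]=(2q+o(1))|I_t|$. (b) Let $|U_t|\le n/\log n$. Then $\mathbb E_t[|U_{t+1}|]=(1+o(1))e^{-q}(1-q)|U_t|$.
   Context: push\&pull protocol: in each synchronous round every vertex chooses a neighbour independently and uniformly at random; an informed vertex informs its chosen neighbour (push) and an uninformed vertex that chose an informed neighbour becomes informed (pull), each such transmission succeeding independently with probability $q$. $I_t$ is the set of vertices informed at the beginning of round $t$ and $\mathbb E_t$ is expectation conditional on $I_t$. An expander sequence is a sequence $(G_n)$ of connected graphs, $G_n$ on $n$ vertices with minimum degree $\delta_n$, maximum degree $\Delta_n$, and $\lambda_n=\max\{|\mu_2|,|\mu_n|\}$ (adjacency eigenvalues), with $\Delta_n/\delta_n=1+o(1)$ and $\lambda_n=o(\Delta_n)$. Asymptotics as $n\to\infty$; natural log. *)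

theory Defs
  imports "HOL-Probability.Probability" "Jordan_Normal_Form.Char_Poly"
begin

definition simple_graph_on :: "nat \<Rightarrow> (nat \<Rightarrow> nat \<Rightarrow> bool) \<Rightarrow> bool" where
  "simple_graph_on n E \<longleftrightarrow>
     (\<forall>u v. E u v \<longrightarrow> u < n \<and> v < n) \<and> (\<forall>u v. E u v \<longrightarrow> E v u) \<and> (\<forall>v. \<not> E v v)"

definition connected_graph_on :: "nat \<Rightarrow> (nat \<Rightarrow> nat \<Rightarrow> bool) \<Rightarrow> bool" where
  "connected_graph_on n E \<longleftrightarrow> simple_graph_on n E \<and> 0 < n \<and>
     (\<forall>u<n. \<forall>v<n. E\<^sup>*\<^sup>* u v)"

definition nbrs :: "(nat \<Rightarrow> nat \<Rightarrow> bool) \<Rightarrow> nat \<Rightarrow> nat set" where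
  "nbrs E v = {u. E v u}"

definition degree :: "(nat \<Rightarrow> nat \<Rightarrow> bool) \<Rightarrow> nat \<Rightarrow> nat" where
  "degree E v = card (nbrs E v)"

definition min_degree :: "nat \<Rightarrow> (nat \<Rightarrow> nat \<Rightarrow> bool) \<Rightarrow> nat" where
  "min_degree n E = Min (degree E ` {0..<n})"

definition max_degree :: "nat \<Rightarrow> (nat \<Rightarrow> nat \<Rightarrow> bool) \<Rightarrow> nat" where
  "max_degree n E = Max (degree E ` {0..<n})"

definition adj_matrix :: "nat \<Rightarrow> (nat \<Rightarrow> nat \<Rightarrow> bool) \<Rightarrow> real mat" where
  "adj_matrix n E = mat n n (\<lambda>(i, j). if E i j then 1 else 0)"

text \<open>Adjacency eigenvalues (with multiplicity) in non-increasing order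
  mu_1 >= mu_2 >= ... >= mu_n; the list is indexed from 0.\<close>
definition adj_eigenvalues :: "nat \<Rightarrow> (nat \<Rightarrow> nat \<Rightarrow> bool) \<Rightarrow> real list" where
  "adj_eigenvalues n E = rev (sorted_list_of_multiset (proots (char_poly (adj_matrix n E))))"

definition second_eig :: "nat \<Rightarrow> (nat \<Rightarrow> nat \<Rightarrow> bool) \<Rightarrow> real" where
  "second_eig n E = max \<bar>adj_eigenvalues n E ! 1\<bar> \<bar>adj_eigenvalues n E ! (n - 1)\<bar>"

definition expander_seq :: "(nat \<Rightarrow> nat \<Rightarrow> nat \<Rightarrow> bool) \<Rightarrow> bool" where
  "expander_seq G \<longleftrightarrow>
     (\<forall>n>0. connected_graph_on n (G n)) \<and>
     ((\<lambda>n. real (max_degree n (G n)) / real (min_degree n (G n))) \<longlonglongrightarrow> 1) \<and>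
     ((\<lambda>n. second_eig n (G n) / real (max_degree n (G n))) \<longlonglongrightarrow> 0)"

text \<open>Every vertex v < n independently picks a uniformly random
  neighbour (first component) and an independent success coin with probability q
  (second component) governing the transmission along its chosen edge.\<close>
definition pp_choices :: "nat \<Rightarrow> (nat \<Rightarrow> nat \<Rightarrow> bool) \<Rightarrow> real \<Rightarrow> (nat \<Rightarrow> nat \<times> bool) pmf" where
  "pp_choices n E q = Pi_pmf {0..<n} (0, False)
     (\<lambda>v. pair_pmf (pmf_of_set (nbrs E v)) (bernoulli_pmf q))"

definition pp_step :: "nat \<Rightarrow> nat set \<Rightarrow> (nat \<Rightarrow> nat \<times> bool) \<Rightarrow> nat set" where
  "pp_step n I \<omega> = I \<union> {u \<in> {0..<n} - I.
      (fst (\<omega> u) \<in> I \<and> snd (\<omega> u)) \<or>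
      (\<exists>v\<in>I. fst (\<omega> v) = u \<and> snd (\<omega> v))}"

text \<open>Distribution of I_{t+1} given I_t = I.\<close>
definition pp_next :: "nat \<Rightarrow> (nat \<Rightarrow> nat \<Rightarrow> bool) \<Rightarrow> real \<Rightarrow> nat set \<Rightarrow> nat set pmf" where
  "pp_next n E q I = map_pmf (pp_step n I) (pp_choices n E q)"

end

theory Submission
  imports Defs "Jordan_Normal_Form.Schur_Decomposition"
begin

text \<open>
  Let \<open>U\<close> be the uninformed set and, for a vertex \<open>u\<close>, let \<open>k\<^sub>u\<close> and \<open>m\<^sub>u\<close> count its
  neighbours in \<open>I\<close> and in \<open>U\<close>. By independence of the choices, \<open>u \<in> U\<close> stays uninformed
  with probability \<open>(1 - q k\<^sub>u / d\<^sub>u) \<Prod>\<^bsub>v \<in> I \<inter> N(u)\<^esub> (1 - q / d\<^sub>v)\<close>.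

  (a) Linearising the product, the expected number of newly informed vertices is
  \<open>\<Sum>\<^bsub>u\<in>U\<^esub> (q k\<^sub>u / d\<^sub>u + \<Sum>\<^bsub>v \<in> I \<inter> N(u)\<^esub> q / d\<^sub>v)\<close> up to \<open>O(\<Sum> k\<^sub>u\<^sup>2 / \<delta>\<^sup>2)\<close>, and
  double counting the edges between \<open>I\<close> and \<open>U\<close> turns both sums into \<open>q |I|\<close> up to
  \<open>O((\<Delta>/\<delta> - 1) |I| + \<Sum>\<^bsub>v\<in>I\<^esub> k\<^sub>v / \<delta>)\<close>.
  (b) For \<open>u \<in> U\<close> the staying probability is \<open>(1 - q) \<Prod>\<^bsub>v \<in> N(u)\<^esub> (1 - q / d\<^sub>v)\<close> up to
  \<open>O(m\<^sub>u / \<delta>)\<close>, and the full product lies between \<open>(1 - q/\<delta>)\<^sup>\<Delta>\<close> and \<open>(1 - q/\<Delta>)\<^sup>\<delta>\<close>,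
  which both tend to \<open>e\<^sup>-\<^sup>q\<close> because \<open>\<delta> \<rightarrow> \<infinity>\<close> and \<open>\<Delta>/\<delta> \<rightarrow> 1\<close>.

  All error terms are controlled by \<open>\<Sum>\<^sub>i |N(i) \<inter> S|\<^sup>2\<close> for the small side \<open>S\<close> (\<open>I\<close> or \<open>U\<close>).
  Expanding the indicator of \<open>S\<close> in an orthonormal eigenbasis of the adjacency matrix bounds
  this by \<open>\<Delta>\<^sup>2 c\<^sub>0\<^sup>2 + \<lambda>\<^sup>2 |S|\<close>, where \<open>c\<^sub>0\<close> is the coefficient on the top eigenvector; a spectral
  gap forces that eigenvector to be nearly constant, so \<open>c\<^sub>0\<^sup>2 = O(|S| (\<Delta> - \<delta>)/(\<Delta> - \<lambda>) + |S|\<^sup>2/n)\<close>.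
  For \<open>|S| \<le> n / ln n\<close> this is \<open>o(\<Delta>\<^sup>2 |S|)\<close>.
\<close>

no_notation Finite_Cartesian_Product.vec_nth (infixl "$" 90)

section \<open>Spectral theorem for real symmetric matrices\<close>

lemma symmetric_mat_entry:
  assumes "A \<in> carrier_mat n n" "transpose_mat A = A" "i < n" "j < n"
  shows "A $$ (i, j) = A $$ (j, i)"
  by (metis assms index_transpose_mat(1) carrier_matD)

lemma real_symmetric_eigenvalue_real:
  fixes A :: "real mat"
  assumes A: "A \<in> carrier_mat n n" and sym: "transpose_mat A = A"
    and z: "z \<in> carrier_vec n" "z \<noteq> 0\<^sub>v n" and ev: "map_mat complex_of_real A *\<^sub>v z = a \<cdot>\<^sub>v z"
  shows "Im a = 0"
proof -
  have zi: "(\<Sum>j<n. complex_of_real (A $$ (i, j)) * z $ j) = a * z $ i" if "i < n" for i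
  proof -
    have "(map_mat complex_of_real A *\<^sub>v z) $ i = (\<Sum>j<n. complex_of_real (A $$ (i, j)) * z $ j)"
      using that A z(1) by (auto simp: scalar_prod_def atLeast0LessThan)
    with ev that z(1) show ?thesis by simp
  qed
  \<comment> \<open>\<open>s = z\<^sup>* A z\<close> equals \<open>a |z|\<^sup>2\<close> and is self-conjugate because \<open>A\<close> is real symmetric.\<close>
  define s where "s = (\<Sum>i<n. cnj (z $ i) * (\<Sum>j<n. complex_of_real (A $$ (i, j)) * z $ j))"
  define nz where "nz = (\<Sum>i<n. (cmod (z $ i))\<^sup>2)"
  have s: "s = a * complex_of_real nz"
    unfolding s_def nz_def of_real_sum using zi
    by (simp add: sum_distrib_left complex_norm_square mult_ac del: of_real_power)
  have "cnj s = s"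
  proof -
    have "cnj s = (\<Sum>j<n. \<Sum>i<n. z $ i * (complex_of_real (A $$ (i, j)) * cnj (z $ j)))"
      unfolding s_def by (simp add: sum_distrib_left) (rule sum.swap)
    also have "\<dots> = s"
      unfolding s_def sum_distrib_left
      by (intro sum.cong refl) (auto simp: symmetric_mat_entry[OF A sym] mult_ac)
    finally show ?thesis .
  qed
  have "nz > 0"
  proof -
    obtain i where "i < n" "z $ i \<noteq> 0"
      using z by (metis eq_vecI carrier_vecD index_zero_vec(1,2))
    then show ?thesis unfolding nz_def by (intro sum_pos2[of _ i]) auto
  qed
  moreover have "Im s = Im a * nz" unfolding s by simp
  ultimately show ?thesis using \<open>cnj s = s\<close> by (metis cnj.simps(2) neg_equal_zero mult_eq_0_iff less_irrefl)
qed

lemma mult_mat_vec_map_Re: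
  fixes A :: "real mat"
  assumes "A \<in> carrier_mat n m" "z \<in> carrier_vec m"
  shows "A *\<^sub>v map_vec Re z = map_vec Re (map_mat complex_of_real A *\<^sub>v z)"
  by (rule eq_vecI) (use assms in \<open>auto simp: scalar_prod_def Re_sum\<close>)

lemma mult_mat_vec_map_Im:
  fixes A :: "real mat"
  assumes "A \<in> carrier_mat n m" "z \<in> carrier_vec m"
  shows "A *\<^sub>v map_vec Im z = map_vec Im (map_mat complex_of_real A *\<^sub>v z)"
  by (rule eq_vecI) (use assms in \<open>auto simp: scalar_prod_def Im_sum\<close>)

lemma real_symmetric_eigenvector_exists:
  fixes A :: "real mat"
  assumes A: "A \<in> carrier_mat n n" and sym: "transpose_mat A = A" and n: "0 < n"
  shows "\<exists>e v. v \<in> carrier_vec n \<and> v \<noteq> 0\<^sub>v n \<and> A *\<^sub>v v = e \<cdot>\<^sub>v v"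
proof -
  define Ac where "Ac = map_mat complex_of_real A"
  have Ac: "Ac \<in> carrier_mat n n" using A unfolding Ac_def by auto
  obtain as where cp: "char_poly Ac = (\<Prod>a\<leftarrow>as. [:- a, 1:])" and len: "length as = n"
    using char_poly_factorized[OF Ac] by blast
  obtain a where "a \<in> set as" using len n by (cases as) auto
  then have "poly (char_poly Ac) a = 0" unfolding cp
    by (induct as) (auto simp: poly_prod_list)
  then have "eigenvalue Ac a" using eigenvalue_root_char_poly[OF Ac] by simp
  then obtain z where z: "z \<in> carrier_vec n" "z \<noteq> 0\<^sub>v n" "Ac *\<^sub>v z = a \<cdot>\<^sub>v z"
    unfolding eigenvalue_def eigenvector_def using Ac by auto
  have a: "Im a = 0" using real_symmetric_eigenvalue_real[OF A sym z[unfolded Ac_def]] .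
  have "A *\<^sub>v map_vec Re z = Re a \<cdot>\<^sub>v map_vec Re z" "A *\<^sub>v map_vec Im z = Re a \<cdot>\<^sub>v map_vec Im z"
    using z(3) a A z(1)
    by (auto simp: Ac_def mult_mat_vec_map_Re mult_mat_vec_map_Im intro!: eq_vecI)
  moreover have "map_vec Re z \<noteq> 0\<^sub>v n \<or> map_vec Im z \<noteq> 0\<^sub>v n"
  proof (rule ccontr)
    assume "\<not> ?thesis"
    then have "z $ i = 0" if "i < n" for i
      using that z(1) by (auto simp: complex_eq_iff dest!: arg_cong[of _ _ "\<lambda>v. v $ i"])
    with z(1,2) show False by (metis eq_vecI carrier_vecD index_zero_vec(1,2))
  qed
  ultimately show ?thesis using z(1) by (metis map_carrier_vec)
qed

lemma real_symmetric_unit_eigenvector_exists: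
  fixes A :: "real mat"
  assumes A: "A \<in> carrier_mat n n" and sym: "transpose_mat A = A" and n: "0 < n"
  shows "\<exists>e v. v \<in> carrier_vec n \<and> v \<bullet> v = 1 \<and> A *\<^sub>v v = e \<cdot>\<^sub>v v"
proof -
  obtain e v0 where v0: "v0 \<in> carrier_vec n" "v0 \<noteq> 0\<^sub>v n" "A *\<^sub>v v0 = e \<cdot>\<^sub>v v0"
    using real_symmetric_eigenvector_exists[OF assms] by auto
  have v0pos: "v0 \<bullet> v0 > 0" using conjugate_square_greater_0_vec[OF v0(1)] v0(2) by simp
  define v where "v = (1 / sqrt (v0 \<bullet> v0)) \<cdot>\<^sub>v v0"
  have "v \<bullet> v = 1" unfolding v_def using v0(1) v0pos
    by (simp add: scalar_prod_smult_distrib smult_scalar_prod_distrib real_sqrt_mult[symmetric])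
  moreover have "A *\<^sub>v v = e \<cdot>\<^sub>v v" unfolding v_def using v0 A
    by (simp add: mult_mat_vec smult_smult_assoc mult.commute)
  moreover have "v \<in> carrier_vec n" unfolding v_def using v0 by simp
  ultimately show ?thesis by blast
qed

lemma orthogonal_mat_of_normalized_cols:
  fixes ws :: "real vec list"
  assumes ws: "set ws \<subseteq> carrier_vec n" "length ws = n" "corthogonal ws"
  defines "W \<equiv> mat_of_cols n (map (\<lambda>w. (1 / sqrt (w \<bullet> w)) \<cdot>\<^sub>v w) ws)"
  shows "W \<in> carrier_mat n n" "transpose_mat W * W = 1\<^sub>m n"
    and "\<And>i. i < n \<Longrightarrow> col W i = (1 / sqrt (ws ! i \<bullet> ws ! i)) \<cdot>\<^sub>v ws ! i"
proof -
  have wsn: "ws ! i \<in> carrier_vec n" if "i < n" for i using ws that by auto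
  have orth: "ws ! i \<bullet> ws ! j = 0 \<longleftrightarrow> i \<noteq> j" if "i < n" "j < n" for i j
    using corthogonalD[OF ws(3)] that ws(2) by simp
  have pos: "ws ! i \<bullet> ws ! i > 0" if "i < n" for i
    using conjugate_square_ge_0_vec[of "ws ! i"] orth[OF that that] by simp
  show W: "W \<in> carrier_mat n n" unfolding W_def using ws(2) by (metis length_map mat_of_cols_carrier(1))
  show colW: "col W i = (1 / sqrt (ws ! i \<bullet> ws ! i)) \<cdot>\<^sub>v ws ! i" if "i < n" for i
    unfolding W_def using that ws wsn by (subst col_mat_of_cols) auto
  show "transpose_mat W * W = 1\<^sub>m n"
  proof (rule eq_matI)
    fix i j assume "i < dim_row (1\<^sub>m n)" "j < dim_col (1\<^sub>m n)"
    then have i: "i < n" and j: "j < n" by auto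
    have "(transpose_mat W * W) $$ (i, j) = col W i \<bullet> col W j"
      using W i j by (simp add: index_mult_mat)
    also have "\<dots> = (1 / sqrt (ws ! i \<bullet> ws ! i)) * (1 / sqrt (ws ! j \<bullet> ws ! j)) * (ws ! i \<bullet> ws ! j)"
      unfolding colW[OF i] colW[OF j] using wsn[OF i] wsn[OF j]
      by (simp add: scalar_prod_smult_distrib smult_scalar_prod_distrib)
    also have "\<dots> = 1\<^sub>m n $$ (i, j)"
      using orth[OF i j] pos[OF i] i j by (cases "i = j") (simp_all add: real_sqrt_mult[symmetric])
    finally show "(transpose_mat W * W) $$ (i, j) = 1\<^sub>m n $$ (i, j)" .
  qed (use W in auto)
qed

lemma orthogonal_mat_with_first_col:
  fixes v :: "real vec"
  assumes v: "v \<in> carrier_vec n" and v1: "v \<bullet> v = 1"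
  shows "\<exists>W \<in> carrier_mat n n. transpose_mat W * W = 1\<^sub>m n \<and> col W 0 = v"
proof -
  have v0: "v \<noteq> 0\<^sub>v n" using v1 by auto
  have n: "0 < n" using v v1 by (cases n) (auto simp: scalar_prod_def)
  interpret cof_vec_space n "TYPE(real)" .
  define b where "b = basis_completion v"
  from basis_completion[OF v v0, folded b_def]
  have b: "distinct b" "\<not> lin_dep (set b)" "set b \<subseteq> carrier_vec n" "hd b = v" "length b = n"
    by auto
  then obtain vs where bv: "b = v # vs" using n by (cases b) auto
  define ws where "ws = gram_schmidt n b"
  from gram_schmidt_result[OF b(3,1,2) refl, folded ws_def]
  have ws: "set ws \<subseteq> carrier_vec n" "length ws = n" "corthogonal ws" by (auto simp: b(5))
  have "hd ws = v" using gram_schmidt_hd[OF v, of vs] unfolding ws_def bv .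
  then have "ws ! 0 = v" using ws(2) n by (cases ws) auto
  then show ?thesis
    using orthogonal_mat_of_normalized_cols[OF ws] n v1 by (intro bexI[of _ "mat_of_cols n _"]) auto
qed

lemma transpose_mat_conj_symmetric:
  fixes A W :: "'a :: comm_ring_1 mat"
  assumes A: "A \<in> carrier_mat n n" and sym: "transpose_mat A = A" and W: "W \<in> carrier_mat n n"
  shows "transpose_mat (transpose_mat W * A * W) = transpose_mat W * A * W"
proof -
  have "transpose_mat (transpose_mat W * A * W) = transpose_mat W * transpose_mat (transpose_mat W * A)"
    using W A by (intro transpose_mult[of _ n n]) auto
  also have "transpose_mat (transpose_mat W * A) = transpose_mat A * W"
    using transpose_mult[of "transpose_mat W" n n A n] W A by simp
  finally show ?thesis using sym W A by (simp add: assoc_mult_mat[of _ n n _ n _ n])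
qed

lemma orthogonal_deflation:
  fixes A W :: "real mat"
  assumes A: "A \<in> carrier_mat (Suc m) (Suc m)" and sym: "transpose_mat A = A"
    and W: "W \<in> carrier_mat (Suc m) (Suc m)" and WtW: "transpose_mat W * W = 1\<^sub>m (Suc m)"
    and eig: "A *\<^sub>v col W 0 = e \<cdot>\<^sub>v col W 0"
  shows "\<exists>A3 \<in> carrier_mat m m. transpose_mat A3 = A3 \<and>
    transpose_mat W * A * W = four_block_mat (mat 1 1 (\<lambda>_. e)) (0\<^sub>m 1 m) (0\<^sub>m m 1) A3"
proof -
  define n where "n = Suc m"
  define A' where "A' = transpose_mat W * A * W"
  have A': "A' \<in> carrier_mat n n" unfolding A'_def n_def using W A by simp
  have A'sym: "transpose_mat A' = A'"
    unfolding A'_def using transpose_mat_conj_symmetric[OF A sym W] .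
  have col0: "A' $$ (i, 0) = (if i = 0 then e else 0)" if i: "i < n" for i
  proof -
    have "A' $$ (i, 0) = row (transpose_mat W) i \<bullet> col (A * W) 0"
      unfolding A'_def using W A i n_def by (simp add: assoc_mult_mat[of _ n n _ n _ n] index_mult_mat)
    also have "\<dots> = e * (col W i \<bullet> col W 0)"
      using col_mult2[OF A W, of 0] eig W i n_def by (simp add: scalar_prod_smult_distrib[of _ n])
    also have "col W i \<bullet> col W 0 = (transpose_mat W * W) $$ (i, 0)"
      using W i n_def by (simp add: index_mult_mat)
    finally show ?thesis using WtW i n_def by simp
  qed
  have row0: "A' $$ (0, j) = (if j = 0 then e else 0)" if j: "j < n" for j
    using col0[OF j] symmetric_mat_entry[OF A' A'sym, of 0 j] j n_def by simp
  define A3 where "A3 = mat m m (\<lambda>(i, j). A' $$ (Suc i, Suc j))"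
  have "transpose_mat A3 = A3"
    by (rule eq_matI) (auto simp: A3_def n_def symmetric_mat_entry[OF A' A'sym])
  moreover have "A' = four_block_mat (mat 1 1 (\<lambda>_. e)) (0\<^sub>m 1 m) (0\<^sub>m m 1) A3"
  proof (rule eq_matI)
    fix i j assume "i < dim_row (four_block_mat (mat 1 1 (\<lambda>_. e)) (0\<^sub>m 1 m) (0\<^sub>m m 1) A3)"
      "j < dim_col (four_block_mat (mat 1 1 (\<lambda>_. e)) (0\<^sub>m 1 m) (0\<^sub>m m 1) A3)"
    then show "A' $$ (i, j) = four_block_mat (mat 1 1 (\<lambda>_. e)) (0\<^sub>m 1 m) (0\<^sub>m m 1) A3 $$ (i, j)"
      using col0 row0 by (cases i; cases j) (auto simp: A3_def n_def)
  qed (use A' n_def in \<open>auto simp: A3_def\<close>)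
  ultimately show ?thesis unfolding A'_def by (auto simp: A3_def)
qed

lemma orthogonal_four_block_lift:
  fixes P :: "real mat"
  assumes P: "P \<in> carrier_mat m m" and PtP: "transpose_mat P * P = 1\<^sub>m m"
  defines "B \<equiv> four_block_mat (1\<^sub>m 1) (0\<^sub>m 1 m) (0\<^sub>m m 1) P"
  shows "B \<in> carrier_mat (Suc m) (Suc m)" "transpose_mat B * B = 1\<^sub>m (Suc m)"
    and "\<And>D A1. D \<in> carrier_mat m m \<Longrightarrow> A1 \<in> carrier_mat 1 1 \<Longrightarrow>
      B * four_block_mat A1 (0\<^sub>m 1 m) (0\<^sub>m m 1) D * transpose_mat B
        = four_block_mat A1 (0\<^sub>m 1 m) (0\<^sub>m m 1) (P * D * transpose_mat P)"
proof -
  have Bt: "transpose_mat B = four_block_mat (1\<^sub>m 1) (0\<^sub>m 1 m) (0\<^sub>m m 1) (transpose_mat P)"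
    unfolding B_def using P by (subst transpose_four_block_mat) auto
  show "B \<in> carrier_mat (Suc m) (Suc m)" unfolding B_def using P by auto
  show "transpose_mat B * B = 1\<^sub>m (Suc m)"
    unfolding Bt unfolding B_def using P PtP
    by (subst mult_four_block_mat[where ?nr1.0=1 and ?n1.0=1 and ?n2.0=m and ?nr2.0=m and ?nc1.0=1 and ?nc2.0=m])
      (auto simp: four_block_one_mat[of 1 m, simplified])
  fix D A1 :: "real mat" assume D: "D \<in> carrier_mat m m" and A1: "A1 \<in> carrier_mat 1 1"
  have BD: "B * four_block_mat A1 (0\<^sub>m 1 m) (0\<^sub>m m 1) D = four_block_mat A1 (0\<^sub>m 1 m) (0\<^sub>m m 1) (P * D)"
    unfolding B_def using P D A1
    by (subst mult_four_block_mat[where ?nr1.0=1 and ?n1.0=1 and ?n2.0=m and ?nr2.0=m and ?nc1.0=1 and ?nc2.0=m]) auto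
  show "B * four_block_mat A1 (0\<^sub>m 1 m) (0\<^sub>m m 1) D * transpose_mat B
      = four_block_mat A1 (0\<^sub>m 1 m) (0\<^sub>m m 1) (P * D * transpose_mat P)"
    unfolding Bt BD using P D A1
    by (subst mult_four_block_mat[where ?nr1.0=1 and ?n1.0=1 and ?n2.0=m and ?nr2.0=m and ?nc1.0=1 and ?nc2.0=m]) auto
qed

lemma orthogonal_mat_mult:
  fixes W B :: "'a :: comm_ring_1 mat"
  assumes "W \<in> carrier_mat n n" "transpose_mat W * W = 1\<^sub>m n"
    and "B \<in> carrier_mat n n" "transpose_mat B * B = 1\<^sub>m n"
  shows "transpose_mat (W * B) * (W * B) = 1\<^sub>m n"
proof -
  have "transpose_mat (W * B) * (W * B) = transpose_mat B * (transpose_mat W * W) * B"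
    using assms(1,3) by (simp add: transpose_mult[of _ n n] assoc_mult_mat[of _ n n _ n _ n])
  also have "\<dots> = transpose_mat B * B" unfolding assms(2) using assms(3) by simp
  finally show ?thesis unfolding assms(4) .
qed

lemma real_symmetric_orthogonal_diagonalization:
  fixes A :: "real mat"
  assumes "A \<in> carrier_mat n n" "transpose_mat A = A"
  shows "\<exists>P D. P \<in> carrier_mat n n \<and> D \<in> carrier_mat n n \<and> transpose_mat P * P = 1\<^sub>m n
    \<and> diagonal_mat D \<and> A = P * D * transpose_mat P"
  using assms
proof (induction n arbitrary: A)
  case 0
  then show ?case
    by (intro exI[of _ "1\<^sub>m 0"] exI[of _ A]) (auto simp: diagonal_mat_def intro!: eq_matI)
next
  case (Suc m A)
  define n where "n = Suc m"
  have A: "A \<in> carrier_mat n n" using Suc n_def by simp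
  obtain e and v :: "real vec" where v: "v \<in> carrier_vec n" "v \<bullet> v = 1" "A *\<^sub>v v = e \<cdot>\<^sub>v v"
    using real_symmetric_unit_eigenvector_exists[OF A Suc.prems(2)] n_def by auto
  obtain W where W: "W \<in> carrier_mat n n" and WtW: "transpose_mat W * W = 1\<^sub>m n" and "col W 0 = v"
    using orthogonal_mat_with_first_col[OF v(1,2)] by blast
  with v(3) have "A *\<^sub>v col W 0 = e \<cdot>\<^sub>v col W 0" by simp
  then obtain A3 where A3: "A3 \<in> carrier_mat m m" "transpose_mat A3 = A3"
    and WAW: "transpose_mat W * A * W = four_block_mat (mat 1 1 (\<lambda>_. e)) (0\<^sub>m 1 m) (0\<^sub>m m 1) A3"
    using orthogonal_deflation[OF Suc.prems(1,2)] W WtW n_def by metis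
  obtain P3 D3 where P3: "P3 \<in> carrier_mat m m" "transpose_mat P3 * P3 = 1\<^sub>m m"
    and D3: "D3 \<in> carrier_mat m m" "diagonal_mat D3" and A3eq: "A3 = P3 * D3 * transpose_mat P3"
    using Suc.IH[OF A3] by blast
  define B where "B = four_block_mat (1\<^sub>m 1) (0\<^sub>m 1 m) (0\<^sub>m m 1) P3"
  define D where "D = four_block_mat (mat 1 1 (\<lambda>_. e)) (0\<^sub>m 1 m) (0\<^sub>m m 1) D3"
  note B = orthogonal_four_block_lift[OF P3, folded B_def n_def]
  have Wt: "transpose_mat W \<in> carrier_mat n n" using W by simp
  have WWt: "W * transpose_mat W = 1\<^sub>m n" by (rule mat_mult_left_right_inverse[OF Wt W WtW])
  have D: "D \<in> carrier_mat n n" unfolding D_def n_def using D3 by auto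
  have "diagonal_mat D"
    using D3 unfolding D_def diagonal_mat_def by (auto simp: less_Suc_eq_0_disj) blast
  moreover have "transpose_mat (W * B) * (W * B) = 1\<^sub>m n" using orthogonal_mat_mult W WtW B by blast
  moreover have "A = (W * B) * D * transpose_mat (W * B)"
  proof -
    have "(W * B) * D * transpose_mat (W * B) = W * (B * D * transpose_mat B) * transpose_mat W"
      using W B D by (simp add: transpose_mult[of _ n n] assoc_mult_mat[of _ n n _ n _ n])
    also have "B * D * transpose_mat B = transpose_mat W * A * W"
      unfolding D_def WAW A3eq using B(3)[OF D3(1)] by simp
    also have "W * (transpose_mat W * A * W) * transpose_mat W = (W * transpose_mat W) * A * (W * transpose_mat W)"
      using W A by (simp add: assoc_mult_mat[of _ n n _ n _ n])
    finally show ?thesis using WWt A by simp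
  qed
  ultimately show ?case using W B D unfolding n_def by (metis mult_carrier_mat)
qed

text \<open>\<open>\<phi> k j\<close> is the \<open>j\<close>-th coordinate of the \<open>k\<close>-th eigenvector, whose eigenvalue is \<open>\<mu> k\<close>.\<close>

locale orthonormal_eigenbasis =
  fixes n :: nat and a :: "nat \<Rightarrow> nat \<Rightarrow> real" and \<phi> :: "nat \<Rightarrow> nat \<Rightarrow> real" and \<mu> :: "nat \<Rightarrow> real"
  assumes orthonormal: "\<And>k l. k < n \<Longrightarrow> l < n \<Longrightarrow> (\<Sum>j<n. \<phi> k j * \<phi> l j) = (if k = l then 1 else 0)"
    and complete: "\<And>i j. i < n \<Longrightarrow> j < n \<Longrightarrow> (\<Sum>k<n. \<phi> k i * \<phi> k j) = (if i = j then 1 else 0)"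
    and eigen: "\<And>k i. k < n \<Longrightarrow> i < n \<Longrightarrow> (\<Sum>j<n. a i j * \<phi> k j) = \<mu> k * \<phi> k i"
begin

lemma permute:
  assumes \<sigma>: "\<sigma> permutes {..<n}"
  shows "orthonormal_eigenbasis n a (\<lambda>k. \<phi> (\<sigma> k)) (\<lambda>k. \<mu> (\<sigma> k))"
proof
  have \<sigma>lt: "\<sigma> k < n" if "k < n" for k using permutes_in_image[OF \<sigma>] that by simp
  have \<sigma>eq: "\<sigma> k = \<sigma> l \<longleftrightarrow> k = l" for k l using permutes_inj[OF \<sigma>] by (auto dest: injD)
  show "(\<Sum>j<n. \<phi> (\<sigma> k) j * \<phi> (\<sigma> l) j) = (if k = l then 1 else 0)" if "k < n" "l < n" for k l
    using orthonormal[OF \<sigma>lt \<sigma>lt] that \<sigma>eq by simp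
  show "(\<Sum>k<n. \<phi> (\<sigma> k) i * \<phi> (\<sigma> k) j) = (if i = j then 1 else 0)" if "i < n" "j < n" for i j
    using sum.permute[OF \<sigma>, of "\<lambda>k. \<phi> k i * \<phi> k j"] complete[OF that] by (simp add: comp_def)
  show "(\<Sum>j<n. a i j * \<phi> (\<sigma> k) j) = \<mu> (\<sigma> k) * \<phi> (\<sigma> k) i" if "k < n" "i < n" for k i
    using eigen[OF \<sigma>lt that(2)] that by simp
qed

end

lemma proots_prod_linear_factors: "proots (\<Prod>a\<leftarrow>es. [:- a, 1:]) = mset (es :: real list)"
proof (induct es)
  case (Cons a es)
  have "(\<Prod>a\<leftarrow>es. [:- a, 1:]) \<noteq> (0 :: real poly)" by (auto simp: prod_list_zero_iff)
  then have "proots ([:- a, 1:] * (\<Prod>a\<leftarrow>es. [:- a, 1:]))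
      = proots [:- a, 1:] + proots (\<Prod>a\<leftarrow>es. [:- a, 1:])"
    by (intro proots_mult) auto
  then show ?case using Cons by (simp add: proots_linear_factor del: mult_pCons_left)
qed simp

lemma real_symmetric_orthonormal_eigenbasis:
  fixes A :: "real mat"
  assumes A: "A \<in> carrier_mat n n" and sym: "transpose_mat A = A"
  shows "\<exists>\<phi> es. length es = n \<and> proots (char_poly A) = mset es
    \<and> orthonormal_eigenbasis n (\<lambda>i j. A $$ (i, j)) \<phi> (\<lambda>k. es ! k)"
proof -
  obtain P D where P: "P \<in> carrier_mat n n" and D: "D \<in> carrier_mat n n"
    and PtP: "transpose_mat P * P = 1\<^sub>m n" and Dd: "diagonal_mat D" and AP: "A = P * D * transpose_mat P"
    using real_symmetric_orthogonal_diagonalization[OF A sym] by blast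
  have Pt: "transpose_mat P \<in> carrier_mat n n" using P by simp
  have PPt: "P * transpose_mat P = 1\<^sub>m n" by (rule mat_mult_left_right_inverse[OF Pt P PtP])
  define es where "es = diag_mat D"
  have "similar_mat A D"
    unfolding similar_mat_def similar_mat_wit_def Let_def
    by (intro exI[of _ P] exI[of _ "transpose_mat P"]) (use A D P PPt PtP AP in auto)
  moreover have "upper_triangular D" using Dd D unfolding diagonal_mat_def upper_triangular_def by auto
  ultimately have "char_poly A = (\<Prod>a\<leftarrow>es. [:- a, 1:])"
    unfolding es_def using char_poly_similar char_poly_upper_triangular[OF D] by metis
  then have "proots (char_poly A) = mset es" by (simp add: proots_prod_linear_factors)
  moreover have "length es = n" unfolding es_def diag_mat_def using D by simp
  moreover have "orthonormal_eigenbasis n (\<lambda>i j. A $$ (i, j)) (\<lambda>k j. P $$ (j, k)) (\<lambda>k. es ! k)"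
  proof
    show "(\<Sum>j<n. P $$ (j, k) * P $$ (j, l)) = (if k = l then 1 else 0)" if "k < n" "l < n" for k l
      using arg_cong[OF PtP, of "\<lambda>M. M $$ (k, l)"] that P
      by (simp add: index_mult_mat scalar_prod_def atLeast0LessThan)
    show "(\<Sum>k<n. P $$ (i, k) * P $$ (j, k)) = (if i = j then 1 else 0)" if "i < n" "j < n" for i j
      using arg_cong[OF PPt, of "\<lambda>M. M $$ (i, j)"] that P
      by (simp add: index_mult_mat scalar_prod_def atLeast0LessThan)
    fix k i assume k: "k < n" and i: "i < n"
    have "A * P = P * D * (transpose_mat P * P)" unfolding AP using P D Pt
      by (simp add: assoc_mult_mat[of _ n n _ n _ n])
    then have "(A * P) $$ (i, k) = (P * D) $$ (i, k)" using PtP P D by simp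
    moreover have "(P * D) $$ (i, k) = P $$ (i, k) * D $$ (k, k)"
      using Dd D P i k unfolding diagonal_mat_def
      by (simp add: index_mult_mat scalar_prod_def atLeast0LessThan sum.remove[of _ k])
    ultimately show "(\<Sum>j<n. A $$ (i, j) * P $$ (j, k)) = es ! k * P $$ (i, k)"
      using A P D i k by (simp add: index_mult_mat scalar_prod_def atLeast0LessThan es_def diag_mat_def)
  qed
  ultimately show ?thesis by blast
qed

definition adj_entry :: "(nat \<Rightarrow> nat \<Rightarrow> bool) \<Rightarrow> nat \<Rightarrow> nat \<Rightarrow> real" where
  "adj_entry E i j = (if E i j then 1 else 0)"

lemma adj_eigenvalues_antimono:
  "i \<le> j \<Longrightarrow> j < length (adj_eigenvalues n E) \<Longrightarrow> adj_eigenvalues n E ! j \<le> adj_eigenvalues n E ! i"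
  unfolding adj_eigenvalues_def by (auto simp: rev_nth intro!: sorted_nth_mono)

lemma adjacency_orthonormal_eigenbasis:
  assumes G: "simple_graph_on n E"
  shows "length (adj_eigenvalues n E) = n
    \<and> (\<exists>\<phi>. orthonormal_eigenbasis n (adj_entry E) \<phi> (\<lambda>k. adj_eigenvalues n E ! k))"
proof -
  define A where "A = adj_matrix n E"
  have A: "A \<in> carrier_mat n n" unfolding A_def adj_matrix_def by simp
  have "transpose_mat A = A"
    using G by (intro eq_matI) (auto simp: A_def adj_matrix_def simple_graph_on_def)
  then obtain \<phi> es where es: "length es = n" "proots (char_poly A) = mset es"
    and \<phi>: "orthonormal_eigenbasis n (\<lambda>i j. A $$ (i, j)) \<phi> (\<lambda>k. es ! k)"
    using real_symmetric_orthonormal_eigenbasis[OF A] by blast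
  have L: "adj_eigenvalues n E = rev (sort es)"
    unfolding adj_eigenvalues_def A_def[symmetric] es(2) by simp
  then have "mset es = mset (adj_eigenvalues n E)" by simp
  then obtain \<sigma> where \<sigma>: "\<sigma> permutes {..<n}" and "permute_list \<sigma> es = adj_eigenvalues n E"
    using es(1) by (metis mset_eq_permutation)
  then have L\<sigma>: "adj_eigenvalues n E ! k = es ! \<sigma> k" if "k < n" for k
    using permute_list_nth[of \<sigma> es k] that es(1) by simp
  have "orthonormal_eigenbasis n (\<lambda>i j. A $$ (i, j)) \<phi>' \<mu> \<Longrightarrow> orthonormal_eigenbasis n (adj_entry E) \<phi>' \<mu>"
    for \<phi>' \<mu>
    unfolding orthonormal_eigenbasis_def A_def adj_matrix_def adj_entry_def by simp
  then have "orthonormal_eigenbasis n (adj_entry E) (\<lambda>k. \<phi> (\<sigma> k)) (\<lambda>k. es ! \<sigma> k)"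
    using orthonormal_eigenbasis.permute[OF \<phi> \<sigma>] by blast
  then have "orthonormal_eigenbasis n (adj_entry E) (\<lambda>k. \<phi> (\<sigma> k)) (\<lambda>k. adj_eigenvalues n E ! k)"
    using L\<sigma> unfolding orthonormal_eigenbasis_def by simp
  then show ?thesis using L es(1) by auto
qed

section \<open>Spectral bounds for graphs\<close>

context orthonormal_eigenbasis
begin

definition coord :: "(nat \<Rightarrow> real) \<Rightarrow> nat \<Rightarrow> real" where
  "coord x k = (\<Sum>j<n. x j * \<phi> k j)"

definition mult_vec :: "(nat \<Rightarrow> real) \<Rightarrow> nat \<Rightarrow> real" where
  "mult_vec x i = (\<Sum>j<n. a i j * x j)"

lemma sum_coord_products:
  "(\<Sum>i<n. (\<Sum>k<n. f k * \<phi> k i) * (\<Sum>l<n. g l * \<phi> l i)) = (\<Sum>k<n. f k * g k)"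
proof -
  have "(\<Sum>i<n. (\<Sum>k<n. f k * \<phi> k i) * (\<Sum>l<n. g l * \<phi> l i))
      = (\<Sum>i<n. \<Sum>k<n. \<Sum>l<n. f k * g l * (\<phi> k i * \<phi> l i))"
    unfolding sum_product by (intro sum.cong refl) (simp add: mult_ac)
  also have "\<dots> = (\<Sum>k<n. \<Sum>l<n. f k * g l * (\<Sum>i<n. \<phi> k i * \<phi> l i))"
    unfolding sum_distrib_left by (subst sum.swap) (rule sum.cong[OF refl], rule sum.swap)
  also have "\<dots> = (\<Sum>k<n. f k * g k)"
    by (simp add: orthonormal if_distrib cong: if_cong)
  finally show ?thesis .
qed

lemma expansion: "j < n \<Longrightarrow> x j = (\<Sum>k<n. coord x k * \<phi> k j)"
proof -
  assume j: "j < n"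
  have "(\<Sum>k<n. coord x k * \<phi> k j) = (\<Sum>l<n. x l * (\<Sum>k<n. \<phi> k l * \<phi> k j))"
    unfolding coord_def by (simp add: sum_distrib_left sum_distrib_right mult_ac) (rule sum.swap)
  also have "\<dots> = x j" using j by (simp add: complete if_distrib cong: if_cong)
  finally show ?thesis by simp
qed

lemma mult_vec_expansion: "i < n \<Longrightarrow> mult_vec x i = (\<Sum>k<n. (\<mu> k * coord x k) * \<phi> k i)"
proof -
  assume i: "i < n"
  have "mult_vec x i = (\<Sum>j<n. a i j * (\<Sum>k<n. coord x k * \<phi> k j))"
    unfolding mult_vec_def by (intro sum.cong refl) (simp add: expansion[symmetric])
  also have "\<dots> = (\<Sum>k<n. coord x k * (\<Sum>j<n. a i j * \<phi> k j))"
    by (simp add: sum_distrib_left mult_ac) (rule sum.swap)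
  also have "\<dots> = (\<Sum>k<n. (\<mu> k * coord x k) * \<phi> k i)"
    by (intro sum.cong refl) (simp add: eigen i)
  finally show ?thesis .
qed

lemma parseval: "(\<Sum>i<n. x i * y i) = (\<Sum>k<n. coord x k * coord y k)"
proof -
  have "(\<Sum>i<n. x i * y i) = (\<Sum>i<n. (\<Sum>k<n. coord x k * \<phi> k i) * (\<Sum>l<n. coord y l * \<phi> l i))"
    by (intro sum.cong refl) (simp add: expansion[symmetric])
  also have "\<dots> = (\<Sum>k<n. coord x k * coord y k)" by (rule sum_coord_products)
  finally show ?thesis .
qed

lemma sum_sq_coord: "(\<Sum>k<n. (coord x k)\<^sup>2) = (\<Sum>i<n. (x i)\<^sup>2)"
  using parseval[of x x] by (simp add: power2_eq_square)

lemma sum_sq_mult_vec: "(\<Sum>i<n. (mult_vec x i)\<^sup>2) = (\<Sum>k<n. (\<mu> k)\<^sup>2 * (coord x k)\<^sup>2)"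
proof -
  have "(\<Sum>i<n. (mult_vec x i)\<^sup>2)
      = (\<Sum>i<n. (\<Sum>k<n. (\<mu> k * coord x k) * \<phi> k i) * (\<Sum>l<n. (\<mu> l * coord x l) * \<phi> l i))"
    by (intro sum.cong refl) (simp add: mult_vec_expansion power2_eq_square)
  also have "\<dots> = (\<Sum>k<n. (\<mu> k)\<^sup>2 * (coord x k)\<^sup>2)"
    unfolding sum_coord_products by (simp add: power2_eq_square mult_ac)
  finally show ?thesis .
qed

lemma quadratic_form: "(\<Sum>i<n. x i * mult_vec x i) = (\<Sum>k<n. \<mu> k * (coord x k)\<^sup>2)"
proof -
  have "(\<Sum>i<n. x i * mult_vec x i)
      = (\<Sum>i<n. (\<Sum>k<n. coord x k * \<phi> k i) * (\<Sum>l<n. (\<mu> l * coord x l) * \<phi> l i))"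
    by (intro sum.cong refl) (simp add: mult_vec_expansion expansion[symmetric])
  also have "\<dots> = (\<Sum>k<n. \<mu> k * (coord x k)\<^sup>2)"
    unfolding sum_coord_products by (simp add: power2_eq_square mult_ac)
  finally show ?thesis .
qed

end

lemma simple_graph_nbrs_subset: "simple_graph_on n E \<Longrightarrow> nbrs E v \<subseteq> {0..<n}"
  unfolding simple_graph_on_def nbrs_def by auto

lemma simple_graph_finite_nbrs: "simple_graph_on n E \<Longrightarrow> finite (nbrs E v)"
  by (rule finite_subset[OF simple_graph_nbrs_subset]) auto

lemma simple_graph_sym: "simple_graph_on n E \<Longrightarrow> E u v \<longleftrightarrow> E v u"
  unfolding simple_graph_on_def by metis

lemma card_nbrs_inter_eq_sum:
  assumes "simple_graph_on n E"
  shows "real (card (nbrs E i \<inter> S)) = (\<Sum>j<n. adj_entry E i j * of_bool (j \<in> S))"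
proof -
  have "nbrs E i \<inter> S = {..<n} \<inter> {j. E i j \<and> j \<in> S}"
    using simple_graph_nbrs_subset[OF assms, of i] unfolding nbrs_def by auto
  then have "real (card (nbrs E i \<inter> S)) = (\<Sum>j<n. of_bool (E i j \<and> j \<in> S))" by simp
  also have "\<dots> = (\<Sum>j<n. adj_entry E i j * of_bool (j \<in> S))"
    by (intro sum.cong refl) (simp add: adj_entry_def)
  finally show ?thesis .
qed

lemma degree_eq_sum:
  "simple_graph_on n E \<Longrightarrow> real (degree E i) = (\<Sum>j<n. adj_entry E i j)"
  using card_nbrs_inter_eq_sum[of n E i UNIV] by (simp add: degree_def)

lemma min_degree_le_degree: "i < n \<Longrightarrow> min_degree n E \<le> degree E i"
  unfolding min_degree_def by (rule Min_le) auto

lemma degree_le_max_degree: "i < n \<Longrightarrow> degree E i \<le> max_degree n E"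
  unfolding max_degree_def by (rule Max_ge) auto

locale adjacency_eigenbasis =
  orthonormal_eigenbasis n "adj_entry E" \<phi> "\<lambda>k. adj_eigenvalues n E ! k"
  for n :: nat and E :: "nat \<Rightarrow> nat \<Rightarrow> bool" and \<phi> :: "nat \<Rightarrow> nat \<Rightarrow> real" +
  assumes simple: "simple_graph_on n E" and two_le_n: "2 \<le> n"
    and length_eigenvalues: "length (adj_eigenvalues n E) = n"
begin

abbreviation \<delta> where "\<delta> \<equiv> real (min_degree n E)"
abbreviation \<Delta> where "\<Delta> \<equiv> real (max_degree n E)"

text \<open>The squared cosine of the angle between the top eigenvector and the all-ones vector.\<close>

definition top_alignment :: real where
  "top_alignment = (coord (\<lambda>_. 1) 0)\<^sup>2 / real n"

lemma abs_eigenvalue_le_second_eig: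
  "1 \<le> k \<Longrightarrow> k < n \<Longrightarrow> \<bar>adj_eigenvalues n E ! k\<bar> \<le> second_eig n E"
  using adj_eigenvalues_antimono[of 1 k n E] adj_eigenvalues_antimono[of k "n - 1" n E]
  unfolding second_eig_def length_eigenvalues by linarith

lemma abs_top_eigenvalue_le_max_degree: "\<bar>adj_eigenvalues n E ! 0\<bar> \<le> \<Delta>"
proof -
  define M where "M = Max ((\<lambda>j. \<bar>\<phi> 0 j\<bar>) ` {..<n})"
  have n: "0 < n" using two_le_n by simp
  have "M \<in> (\<lambda>j. \<bar>\<phi> 0 j\<bar>) ` {..<n}" unfolding M_def by (rule Max_in) (use n in auto)
  then obtain i where i: "i < n" and Mi: "M = \<bar>\<phi> 0 i\<bar>" by blast
  have Mge: "\<bar>\<phi> 0 j\<bar> \<le> M" if "j < n" for j unfolding M_def using that by (intro Max_ge) auto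
  have "M > 0"
  proof (rule ccontr)
    assume "\<not> M > 0"
    then have "\<phi> 0 j = 0" if "j < n" for j using Mge[OF that] by simp
    then show False using orthonormal[OF n n] by simp
  qed
  have "\<bar>adj_eigenvalues n E ! 0\<bar> * M = \<bar>\<Sum>j<n. adj_entry E i j * \<phi> 0 j\<bar>"
    using eigen[OF n i] Mi by (simp add: abs_mult)
  also have "\<dots> \<le> (\<Sum>j<n. adj_entry E i j * M)"
  proof (rule order_trans[OF sum_abs], rule sum_mono)
    fix j assume "j \<in> {..<n}"
    then show "\<bar>adj_entry E i j * \<phi> 0 j\<bar> \<le> adj_entry E i j * M"
      using Mge[of j] by (simp add: abs_mult adj_entry_def)
  qed
  also have "\<dots> \<le> \<Delta> * M"
    using degree_le_max_degree[of i n E] i \<open>M > 0\<close> degree_eq_sum[OF simple, of i]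
    by (simp add: sum_distrib_right[symmetric])
  finally show ?thesis using \<open>M > 0\<close> by simp
qed

lemma sum_split_top:
  "(\<Sum>k<n. f k) = f 0 + (\<Sum>k\<in>{1..<n}. f k)"
  using two_le_n by (simp add: sum.atLeast_Suc_lessThan atLeast0LessThan[symmetric])

lemma min_degree_le_rayleigh:
  defines "c \<equiv> coord (\<lambda>_. 1) 0"
  shows "real n * \<delta> \<le> adj_eigenvalues n E ! 0 * c\<^sup>2 + second_eig n E * (real n - c\<^sup>2)"
proof -
  have "real n * \<delta> = (\<Sum>i<n. \<delta>)" by simp
  also have "\<dots> \<le> (\<Sum>i<n. 1 * mult_vec (\<lambda>_. 1) i)"
  proof (rule sum_mono)
    fix i assume "i \<in> {..<n}"
    then show "\<delta> \<le> 1 * mult_vec (\<lambda>_. 1) i"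
      using min_degree_le_degree[of i n E] degree_eq_sum[OF simple, of i] by (simp add: mult_vec_def)
  qed
  also have "\<dots> = (\<Sum>k<n. adj_eigenvalues n E ! k * (coord (\<lambda>_. 1) k)\<^sup>2)"
    by (rule quadratic_form)
  also have "\<dots> \<le> adj_eigenvalues n E ! 0 * c\<^sup>2 + (\<Sum>k\<in>{1..<n}. second_eig n E * (coord (\<lambda>_. 1) k)\<^sup>2)"
    unfolding sum_split_top c_def
  proof (intro add_left_mono sum_mono mult_right_mono)
    fix k assume "k \<in> {1..<n}"
    then show "adj_eigenvalues n E ! k \<le> second_eig n E"
      using abs_eigenvalue_le_second_eig[of k] by simp
  qed simp
  also have "(\<Sum>k\<in>{1..<n}. second_eig n E * (coord (\<lambda>_. 1) k)\<^sup>2) = second_eig n E * (real n - c\<^sup>2)"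
    using sum_sq_coord[of "\<lambda>_. 1"] sum_split_top[of "\<lambda>k. (coord (\<lambda>_. 1) k)\<^sup>2"]
    by (simp add: c_def sum_distrib_left[symmetric])
  finally show ?thesis .
qed

lemma top_alignment_bounds:
  assumes gap: "second_eig n E < \<delta>"
  shows "0 \<le> top_alignment" "top_alignment \<le> 1"
    and "1 - top_alignment \<le> (\<Delta> - \<delta>) / (\<Delta> - second_eig n E)"
proof -
  define c where "c = coord (\<lambda>_. 1) 0"
  define g where "g = top_alignment"
  define \<mu>0 where "\<mu>0 = adj_eigenvalues n E ! 0"
  define l where "l = second_eig n E"
  have npos: "real n > 0" using two_le_n by simp
  have g: "g = c\<^sup>2 / real n" unfolding g_def top_alignment_def c_def ..
  have "c\<^sup>2 \<le> (\<Sum>k<n. (coord (\<lambda>_. 1) k)\<^sup>2)"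
    unfolding c_def by (rule member_le_sum) (use two_le_n in auto)
  then have "c\<^sup>2 \<le> real n" using sum_sq_coord[of "\<lambda>_. 1"] by simp
  then show g01: "0 \<le> top_alignment" "top_alignment \<le> 1"
    unfolding g_def[symmetric] g using npos by auto
  have "real n * \<delta> \<le> \<mu>0 * c\<^sup>2 + l * (real n - c\<^sup>2)"
    using min_degree_le_rayleigh unfolding c_def \<mu>0_def l_def .
  also have "\<dots> = real n * (\<mu>0 * g + l * (1 - g))"
    unfolding g using npos by (simp add: field_simps)
  finally have key: "\<delta> \<le> \<mu>0 * g + l * (1 - g)" using npos by simp
  have "\<mu>0 \<le> \<Delta>" using abs_top_eigenvalue_le_max_degree unfolding \<mu>0_def by simp
  have "l < \<mu>0"
  proof (rule ccontr)
    assume "\<not> l < \<mu>0"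
    then have "\<mu>0 * g \<le> l * g" using g01 unfolding g_def by (intro mult_right_mono) auto
    then have "\<mu>0 * g + l * (1 - g) \<le> l" by (simp add: algebra_simps)
    then show False using key gap unfolding l_def by linarith
  qed
  have "(1 - g) * (\<mu>0 - l) \<le> \<mu>0 - \<delta>" using key by (simp add: algebra_simps)
  then have "(1 - g) * (\<mu>0 - l) * (\<Delta> - l) \<le> (\<mu>0 - \<delta>) * (\<Delta> - l)"
    using \<open>\<mu>0 \<le> \<Delta>\<close> \<open>l < \<mu>0\<close> by (intro mult_right_mono) auto
  also have "\<dots> \<le> (\<Delta> - \<delta>) * (\<mu>0 - l)"
  proof -
    have "0 \<le> (\<Delta> - \<mu>0) * (\<delta> - l)" using \<open>\<mu>0 \<le> \<Delta>\<close> gap unfolding l_def by simp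
    then show ?thesis by (simp add: algebra_simps)
  qed
  finally have "((1 - g) * (\<Delta> - l)) * (\<mu>0 - l) \<le> (\<Delta> - \<delta>) * (\<mu>0 - l)" by (simp add: mult_ac)
  then have "(1 - g) * (\<Delta> - l) \<le> \<Delta> - \<delta>"
    using \<open>l < \<mu>0\<close> by (auto elim: mult_right_le_imp_le)
  then show "1 - top_alignment \<le> (\<Delta> - \<delta>) / (\<Delta> - second_eig n E)"
    using \<open>l < \<mu>0\<close> \<open>\<mu>0 \<le> \<Delta>\<close> unfolding g_def l_def by (simp add: pos_le_divide_eq)
qed

lemma top_coord_sq_le:
  "(coord x 0)\<^sup>2 \<le> 2 * (\<Sum>i<n. (x i)\<^sup>2) * (1 - top_alignment)
     + 2 * top_alignment * (\<Sum>i<n. x i)\<^sup>2 / real n"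
proof -
  define c where "c = coord (\<lambda>_. 1) 0"
  define w where "w = (\<lambda>j. \<phi> 0 j - c / real n)"
  have npos: "real n > 0" using two_le_n by simp
  have g: "top_alignment = c\<^sup>2 / real n" unfolding top_alignment_def c_def ..
  have c: "c = (\<Sum>j<n. \<phi> 0 j)" unfolding c_def coord_def by simp
  have w_norm: "(\<Sum>j<n. (w j)\<^sup>2) = 1 - top_alignment"
  proof -
    have "(\<Sum>j<n. (w j)\<^sup>2) = (\<Sum>j<n. (\<phi> 0 j)\<^sup>2) - 2 * (c / real n) * (\<Sum>j<n. \<phi> 0 j) + real n * (c / real n)\<^sup>2"
      unfolding w_def power2_diff
      by (simp add: sum.distrib sum_subtractf sum_distrib_left sum_divide_distrib mult_ac)
    also have "(\<Sum>j<n. (\<phi> 0 j)\<^sup>2) = 1" using orthonormal[of 0 0] two_le_n by (simp add: power2_eq_square)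
    finally show ?thesis unfolding c[symmetric] g using npos by (simp add: power2_eq_square field_simps)
  qed
  have "coord x 0 = (\<Sum>j<n. x j * w j) + c / real n * (\<Sum>j<n. x j)"
    unfolding coord_def w_def
    by (simp add: right_diff_distrib sum_subtractf sum_distrib_left sum_distrib_right
        sum_divide_distrib mult_ac)
  then have "(coord x 0)\<^sup>2 \<le> 2 * (\<Sum>j<n. x j * w j)\<^sup>2 + 2 * (c / real n * (\<Sum>j<n. x j))\<^sup>2"
    using sum_squares_bound[of "\<Sum>j<n. x j * w j" "c / real n * (\<Sum>j<n. x j)"]
    by (simp add: power2_sum)
  also have "(\<Sum>j<n. x j * w j)\<^sup>2 \<le> (\<Sum>i<n. (x i)\<^sup>2) * (1 - top_alignment)"
    using Cauchy_Schwarz_ineq_sum[of x w "{..<n}"] w_norm by simp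
  also have "(c / real n * (\<Sum>j<n. x j))\<^sup>2 = top_alignment * (\<Sum>i<n. x i)\<^sup>2 / real n"
    unfolding g using npos by (simp add: power2_eq_square field_simps)
  finally show ?thesis by simp
qed

lemma sum_sq_card_nbrs_inter_le:
  assumes gap: "second_eig n E < \<delta>" and S: "S \<subseteq> {..<n}"
  shows "(\<Sum>i<n. (real (card (nbrs E i \<inter> S)))\<^sup>2)
    \<le> \<Delta>\<^sup>2 * (2 * real (card S) * ((\<Delta> - \<delta>) / (\<Delta> - second_eig n E)) + 2 * (real (card S))\<^sup>2 / real n)
      + (second_eig n E)\<^sup>2 * real (card S)"
proof -
  define x where "x = (\<lambda>j. of_bool (j \<in> S) :: real)"
  define s where "s = real (card S)"
  note g = top_alignment_bounds[OF gap]
  have "(\<Sum>j<n. x j) = s"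
    using S unfolding x_def s_def by (simp add: Int_absorb1 Collect_mem_eq)
  moreover have "(\<Sum>j<n. (x j)\<^sup>2) = (\<Sum>j<n. x j)" unfolding x_def by (intro sum.cong) auto
  ultimately have sums: "(\<Sum>j<n. x j) = s" "(\<Sum>j<n. (x j)\<^sup>2) = s" by auto
  have s0: "0 \<le> s" unfolding s_def by simp
  have "(coord x 0)\<^sup>2 \<le> 2 * s * (1 - top_alignment) + 2 * top_alignment * s\<^sup>2 / real n"
    using top_coord_sq_le[of x] unfolding sums .
  also have "\<dots> \<le> 2 * s * ((\<Delta> - \<delta>) / (\<Delta> - second_eig n E)) + 2 * s\<^sup>2 / real n"
    using g s0 two_le_n
    by (intro add_mono mult_left_mono divide_right_mono) (auto simp: mult_left_le_one_le)
  finally have top: "(coord x 0)\<^sup>2 \<le> 2 * s * ((\<Delta> - \<delta>) / (\<Delta> - second_eig n E)) + 2 * s\<^sup>2 / real n" .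
  have "(\<Sum>i<n. (real (card (nbrs E i \<inter> S)))\<^sup>2) = (\<Sum>k<n. (adj_eigenvalues n E ! k)\<^sup>2 * (coord x k)\<^sup>2)"
    using sum_sq_mult_vec[of x] unfolding mult_vec_def x_def card_nbrs_inter_eq_sum[OF simple] .
  also have "\<dots> \<le> \<Delta>\<^sup>2 * (coord x 0)\<^sup>2 + (\<Sum>k\<in>{1..<n}. (second_eig n E)\<^sup>2 * (coord x k)\<^sup>2)"
    unfolding sum_split_top
  proof (intro add_mono sum_mono mult_right_mono)
    show "(adj_eigenvalues n E ! 0)\<^sup>2 \<le> \<Delta>\<^sup>2"
      using power_mono[OF abs_top_eigenvalue_le_max_degree abs_ge_zero, of 2] by simp
    fix k assume "k \<in> {1..<n}"
    then show "(adj_eigenvalues n E ! k)\<^sup>2 \<le> (second_eig n E)\<^sup>2"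
      using power_mono[OF abs_eigenvalue_le_second_eig abs_ge_zero, of k 2] by simp
  qed auto
  also have "(\<Sum>k\<in>{1..<n}. (second_eig n E)\<^sup>2 * (coord x k)\<^sup>2) \<le> (second_eig n E)\<^sup>2 * s"
  proof -
    have "(\<Sum>k\<in>{1..<n}. (coord x k)\<^sup>2) \<le> s"
      using sum_sq_coord[of x] sum_split_top[of "\<lambda>k. (coord x k)\<^sup>2"] sums
        zero_le_power2[of "coord x 0"] by linarith
    then show ?thesis by (simp add: sum_distrib_left[symmetric] mult_left_mono)
  qed
  finally show ?thesis
    using mult_left_mono[OF top, of "\<Delta>\<^sup>2"] unfolding s_def by simp
qed

lemma min_degree_le_sum_sq_eigenvalues:
  "real n * \<delta> \<le> \<Delta>\<^sup>2 + real n * (second_eig n E)\<^sup>2"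
proof -
  define e where "e = (\<lambda>i j::nat. of_bool (j = i) :: real)"
  have deg: "real (degree E i) = (\<Sum>k<n. (adj_eigenvalues n E ! k)\<^sup>2 * (\<phi> k i)\<^sup>2)" if i: "i < n" for i
  proof -
    have "coord (e i) k = \<phi> k i" "mult_vec (e i) j = adj_entry E j i" for k j
      unfolding coord_def mult_vec_def e_def using i by (simp_all add: Int_absorb1 mult.commute)
    then have "(\<Sum>k<n. (adj_eigenvalues n E ! k)\<^sup>2 * (\<phi> k i)\<^sup>2) = (\<Sum>j<n. (adj_entry E j i)\<^sup>2)"
      using sum_sq_mult_vec[of "e i"] by simp
    also have "\<dots> = (\<Sum>j<n. adj_entry E i j)"
      by (intro sum.cong refl) (simp add: adj_entry_def simple_graph_sym[OF simple])
    finally show ?thesis using degree_eq_sum[OF simple] by simp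
  qed
  have "real n * \<delta> \<le> (\<Sum>i<n. real (degree E i))"
    using sum_mono[of "{..<n}" "\<lambda>_. \<delta>" "\<lambda>i. real (degree E i)"] min_degree_le_degree[of _ n E] by simp
  also have "\<dots> = (\<Sum>k<n. (adj_eigenvalues n E ! k)\<^sup>2 * (\<Sum>i<n. (\<phi> k i)\<^sup>2))"
    by (simp add: deg sum_distrib_left) (rule sum.swap)
  also have "\<dots> = (\<Sum>k<n. (adj_eigenvalues n E ! k)\<^sup>2)"
    by (intro sum.cong refl) (simp add: orthonormal power2_eq_square)
  also have "\<dots> \<le> \<Delta>\<^sup>2 + (\<Sum>k\<in>{1..<n}. (second_eig n E)\<^sup>2)"
    unfolding sum_split_top
  proof (intro add_mono sum_mono)
    show "(adj_eigenvalues n E ! 0)\<^sup>2 \<le> \<Delta>\<^sup>2"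
      using power_mono[OF abs_top_eigenvalue_le_max_degree abs_ge_zero, of 2] by simp
    fix k assume "k \<in> {1..<n}"
    then show "(adj_eigenvalues n E ! k)\<^sup>2 \<le> (second_eig n E)\<^sup>2"
      using power_mono[OF abs_eigenvalue_le_second_eig abs_ge_zero, of k 2] by simp
  qed
  also have "\<dots> \<le> \<Delta>\<^sup>2 + real n * (second_eig n E)\<^sup>2" by (simp add: mult_right_mono)
  finally show ?thesis .
qed

end

lemma adjacency_eigenbasis_exists:
  assumes "simple_graph_on n E" "2 \<le> n"
  obtains \<phi> where "adjacency_eigenbasis n E \<phi>"
  using adjacency_orthonormal_eigenbasis[OF assms(1)] assms
  by (auto simp: adjacency_eigenbasis_def adjacency_eigenbasis_axioms_def)

section \<open>One round of push and pull\<close>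

lemma prob_pmf_of_set_bernoulli_miss:
  fixes A :: "'a :: countable set"
  assumes N: "N \<noteq> {}" "finite N" and q: "0 \<le> q" "q \<le> 1"
  shows "measure_pmf.prob (pair_pmf (pmf_of_set N) (bernoulli_pmf q)) {x. \<not> (fst x \<in> A \<and> snd x)}
     = 1 - q * real (card (N \<inter> A)) / real (card N)"
proof -
  let ?M = "pair_pmf (pmf_of_set N) (bernoulli_pmf q)"
  have "{x. \<not> (fst x \<in> A \<and> snd x)} = space (measure_pmf ?M) - (A \<times> {True})" by auto
  then have "measure_pmf.prob ?M {x. \<not> (fst x \<in> A \<and> snd x)} = 1 - measure_pmf.prob ?M (A \<times> {True})"
    using measure_pmf.prob_compl[of "A \<times> {True}" ?M] by simp
  also have "measure_pmf.prob ?M (A \<times> {True})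
      = measure_pmf.prob (pmf_of_set N) A * measure_pmf.prob (bernoulli_pmf q) {True}"
    by (rule measure_pmf_prob_product) auto
  finally show ?thesis using q by (simp add: measure_pmf_single measure_pmf_of_set[OF N])
qed

lemma expectation_card_filter:
  assumes "finite U"
  shows "measure_pmf.expectation p (\<lambda>\<omega>. real (card {u \<in> U. P u \<omega>}))
    = (\<Sum>u\<in>U. measure_pmf.prob p {\<omega>. P u \<omega>})"
proof -
  have "real (card {u \<in> U. P u \<omega>}) = (\<Sum>u\<in>U. indicator {\<omega>. P u \<omega>} \<omega>)" for \<omega>
    using sum.inter_filter[OF assms, of "\<lambda>_. 1 :: real" "\<lambda>u. P u \<omega>"] by (simp add: indicator_def of_bool_def)
  then show ?thesis
    by (simp add: Bochner_Integration.integral_sum measure_pmf.integrable_const_bound[where B = 1])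
qed

lemma prod_one_minus_ge:
  fixes b :: "'a \<Rightarrow> real"
  assumes "finite A" "\<And>a. a \<in> A \<Longrightarrow> 0 \<le> b a \<and> b a \<le> 1"
  shows "1 - (\<Sum>a\<in>A. b a) \<le> (\<Prod>a\<in>A. 1 - b a)"
  using assms
proof (induction A rule: finite_induct)
  case (insert x F)
  then have "1 - (\<Sum>a\<in>insert x F. b a) \<le> (1 - b x) * (1 - (\<Sum>a\<in>F. b a))"
    using sum_nonneg[of F b] by (simp add: algebra_simps)
  also have "\<dots> \<le> (1 - b x) * (\<Prod>a\<in>F. 1 - b a)" using insert by (intro mult_left_mono) auto
  finally show ?case using insert by simp
qed simp

lemma prod_one_minus_le:
  fixes b :: "'a \<Rightarrow> real"
  assumes "finite A" "\<And>a. a \<in> A \<Longrightarrow> 0 \<le> b a \<and> b a \<le> 1"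
  shows "(\<Prod>a\<in>A. 1 - b a) \<le> 1 - (\<Sum>a\<in>A. b a) + (\<Sum>a\<in>A. b a)\<^sup>2 / 2"
  using assms
proof (induction A rule: finite_induct)
  case (insert x F)
  define S where "S = (\<Sum>a\<in>F. b a)"
  have bx: "0 \<le> b x" "b x \<le> 1" and S0: "0 \<le> S" using insert sum_nonneg[of F b] by (auto simp: S_def)
  have "(\<Prod>a\<in>insert x F. 1 - b a) \<le> (1 - b x) * (1 - S + S\<^sup>2 / 2)"
    using insert bx unfolding S_def by (auto intro: mult_left_mono)
  also have "\<dots> \<le> 1 - (S + b x) + (S + b x)\<^sup>2 / 2"
    using mult_nonneg_nonneg[OF bx(1) S0] mult_nonneg_nonneg[OF mult_nonneg_nonneg[OF bx(1) S0] S0] bx(1)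
    by (simp add: power2_eq_square algebra_simps)
  finally show ?case using insert unfolding S_def by (simp add: add.commute)
qed simp

lemma sum_le_sqrt_card_sum_sq:
  fixes f :: "'a \<Rightarrow> real"
  assumes "finite A"
  shows "(\<Sum>a\<in>A. f a) \<le> sqrt (real (card A) * (\<Sum>a\<in>A. (f a)\<^sup>2))"
  using Cauchy_Schwarz_ineq_sum[of "\<lambda>_. 1" f A] real_le_rsqrt by simp

lemma sum_nbrs_swap:
  fixes g :: "nat \<Rightarrow> real"
  assumes "finite A" "finite B" and sym: "\<And>u v. E u v \<longleftrightarrow> E v u"
  shows "(\<Sum>u\<in>A. \<Sum>v\<in>B \<inter> nbrs E u. g v) = (\<Sum>v\<in>B. real (card (nbrs E v \<inter> A)) * g v)"
proof -
  have "(\<Sum>u\<in>A. \<Sum>v\<in>B \<inter> nbrs E u. g v) = (\<Sum>u\<in>A. \<Sum>v\<in>B. of_bool (E u v) * g v)"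
    using assms by (simp add: nbrs_def Int_def)
  also have "\<dots> = (\<Sum>v\<in>B. \<Sum>u\<in>A. of_bool (E u v) * g v)" by (rule sum.swap)
  also have "\<dots> = (\<Sum>v\<in>B. real (card (nbrs E v \<inter> A)) * g v)"
    using assms by (simp add: nbrs_def sum_distrib_right[symmetric] Int_def conj_commute)
  finally show ?thesis .
qed

text \<open>Probability that an uninformed vertex u stays uninformed during one round: the first factor
  is the chance that its own pull misses I, the product the chance that no informed neighbour pushes
  to it.\<close>

definition stay_prob :: "(nat \<Rightarrow> nat \<Rightarrow> bool) \<Rightarrow> real \<Rightarrow> nat set \<Rightarrow> nat \<Rightarrow> real" where
  "stay_prob E q I u = (1 - q * real (card (nbrs E u \<inter> I)) / real (degree E u)) *
     (\<Prod>v \<in> I \<inter> nbrs E u. 1 - q / real (degree E v))"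

locale push_pull_graph =
  fixes n :: nat and E :: "nat \<Rightarrow> nat \<Rightarrow> bool" and q :: real
  assumes simple: "simple_graph_on n E" and n_pos: "0 < n" and min_degree_pos: "1 \<le> min_degree n E"
    and q_pos: "0 < q" and q_le_1: "q \<le> 1"
begin

abbreviation \<delta> where "\<delta> \<equiv> real (min_degree n E)"
abbreviation \<Delta> where "\<Delta> \<equiv> real (max_degree n E)"

lemma degree_bounds: "v < n \<Longrightarrow> \<delta> \<le> real (degree E v) \<and> real (degree E v) \<le> \<Delta>"
  using min_degree_le_degree[of v n E] degree_le_max_degree[of v n E] by simp

lemma nbrs_nonempty: "v < n \<Longrightarrow> nbrs E v \<noteq> {}"
  using degree_bounds[of v] min_degree_pos by (auto simp: degree_def)

lemma nbrs_subset: "nbrs E v \<subseteq> {0..<n}"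
  using simple_graph_nbrs_subset[OF simple] .

lemma finite_nbrs: "finite (nbrs E v)"
  using simple_graph_finite_nbrs[OF simple] .

lemma stays_uninformed_iff:
  assumes I: "I \<subseteq> {0..<n}" and u: "u < n" "u \<notin> I"
  shows "u \<notin> pp_step n I \<omega> \<longleftrightarrow> \<omega> \<in> Pi {0..<n} (\<lambda>v. if v = u then {y. \<not> (fst y \<in> I \<and> snd y)}
      else if v \<in> I then {y. \<not> (fst y = u \<and> snd y)} else UNIV)"
proof -
  have "u \<notin> pp_step n I \<omega> \<longleftrightarrow>
      \<not> (fst (\<omega> u) \<in> I \<and> snd (\<omega> u)) \<and> (\<forall>v\<in>I. \<not> (fst (\<omega> v) = u \<and> snd (\<omega> v)))"
    using u unfolding pp_step_def by auto
  also have "\<dots> \<longleftrightarrow> \<omega> \<in> Pi {0..<n} (\<lambda>v. if v = u then {y. \<not> (fst y \<in> I \<and> snd y)}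
      else if v \<in> I then {y. \<not> (fst y = u \<and> snd y)} else UNIV)"
    using I u unfolding Pi_def by (auto 0 3)
  finally show ?thesis .
qed

lemma prob_stays_uninformed:
  assumes I: "I \<subseteq> {0..<n}" and u: "u < n" "u \<notin> I"
  shows "measure_pmf.prob (pp_choices n E q) {\<omega>. u \<notin> pp_step n I \<omega>} = stay_prob E q I u"
proof -
  define B where "B = (\<lambda>v. if v = u then {y. \<not> (fst y \<in> I \<and> snd y)}
      else if v \<in> I then {y. \<not> (fst y = u \<and> snd y)} else (UNIV :: (nat \<times> bool) set))"
  let ?p = "\<lambda>v. pair_pmf (pmf_of_set (nbrs E v)) (bernoulli_pmf q)"
  have p: "measure_pmf.prob (?p v) (B v) =
      (if v = u then 1 - q * real (card (nbrs E u \<inter> I)) / real (degree E u)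
       else if v \<in> I \<inter> nbrs E u then 1 - q / real (degree E v) else 1)" if v: "v < n" for v
  proof -
    note miss = prob_pmf_of_set_bernoulli_miss[OF nbrs_nonempty[OF v] finite_nbrs, of q]
    have "{y. \<not> (fst y = u \<and> snd y)} = {y. \<not> (fst y \<in> {u} \<and> snd y)}" by auto
    moreover have "nbrs E v \<inter> {u} = (if v \<in> nbrs E u then {u} else {})"
      using simple_graph_sym[OF simple] unfolding nbrs_def by auto
    ultimately show ?thesis
      using miss[of I] miss[of "{u}"] q_pos q_le_1 unfolding B_def degree_def by auto
  qed
  have "measure_pmf.prob (pp_choices n E q) {\<omega>. u \<notin> pp_step n I \<omega>} = (\<Prod>v\<in>{0..<n}. measure_pmf.prob (?p v) (B v))"
    unfolding stays_uninformed_iff[OF assms] B_def[symmetric] pp_choices_def Collect_mem_eq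
    by (rule measure_Pi_pmf_Pi) simp
  also have "\<dots> = measure_pmf.prob (?p u) (B u) * (\<Prod>v\<in>{0..<n} - {u}. measure_pmf.prob (?p v) (B v))"
    by (rule prod.remove) (use u in auto)
  also have "(\<Prod>v\<in>{0..<n} - {u}. measure_pmf.prob (?p v) (B v)) = (\<Prod>v\<in>I \<inter> nbrs E u. 1 - q / real (degree E v))"
  proof -
    have "{0..<n} \<inter> {v \<in> I. v \<in> nbrs E u} = I \<inter> nbrs E u" using I by auto
    then show ?thesis using I u by (simp add: p prod.If_cases Diff_Int_distrib2)
  qed
  finally show ?thesis using p[OF u(1)] unfolding stay_prob_def by simp
qed

lemma expectation_card_newly_informed:
  assumes I: "I \<subseteq> {0..<n}"
  shows "measure_pmf.expectation (pp_next n E q I) (\<lambda>J. real (card (J - I)))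
     = (\<Sum>u\<in>{0..<n} - I. 1 - stay_prob E q I u)"
proof -
  have new: "pp_step n I \<omega> - I = {u \<in> {0..<n} - I. u \<in> pp_step n I \<omega>}" for \<omega>
    unfolding pp_step_def by auto
  have "measure_pmf.expectation (pp_next n E q I) (\<lambda>J. real (card (J - I)))
      = (\<Sum>u\<in>{0..<n} - I. measure_pmf.prob (pp_choices n E q) {\<omega>. u \<in> pp_step n I \<omega>})"
    unfolding pp_next_def integral_map_pmf new by (rule expectation_card_filter) simp
  also have "\<dots> = (\<Sum>u\<in>{0..<n} - I. 1 - stay_prob E q I u)"
  proof (rule sum.cong[OF refl])
    fix u assume "u \<in> {0..<n} - I"
    then show "measure_pmf.prob (pp_choices n E q) {\<omega>. u \<in> pp_step n I \<omega>} = 1 - stay_prob E q I u"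
      using measure_pmf.prob_compl[of "{\<omega>. u \<notin> pp_step n I \<omega>}" "pp_choices n E q"]
        prob_stays_uninformed[OF I] by (simp add: Compl_eq_Diff_UNIV[symmetric] Collect_neg_eq[symmetric])
  qed
  finally show ?thesis .
qed

lemma expectation_card_uninformed:
  assumes I: "I \<subseteq> {0..<n}"
  shows "measure_pmf.expectation (pp_next n E q I) (\<lambda>J. real (card ({0..<n} - J)))
     = (\<Sum>u\<in>{0..<n} - I. stay_prob E q I u)"
proof -
  have left: "{0..<n} - pp_step n I \<omega> = {u \<in> {0..<n} - I. u \<notin> pp_step n I \<omega>}" for \<omega>
    unfolding pp_step_def by auto
  have "measure_pmf.expectation (pp_next n E q I) (\<lambda>J. real (card ({0..<n} - J)))
      = (\<Sum>u\<in>{0..<n} - I. measure_pmf.prob (pp_choices n E q) {\<omega>. u \<notin> pp_step n I \<omega>})"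
    unfolding pp_next_def integral_map_pmf left by (rule expectation_card_filter) simp
  then show ?thesis using prob_stays_uninformed[OF I] by simp
qed

definition deg_in :: "nat set \<Rightarrow> nat \<Rightarrow> real" where
  "deg_in S u = real (card (nbrs E u \<inter> S))"

definition pull_rate :: "nat set \<Rightarrow> nat \<Rightarrow> real" where
  "pull_rate I u = q * deg_in I u / real (degree E u)"

definition push_rate :: "nat set \<Rightarrow> nat \<Rightarrow> real" where
  "push_rate I u = (\<Sum>v\<in>I \<inter> nbrs E u. q / real (degree E v))"

lemma one_le_min_degree: "1 \<le> \<delta>"
  using min_degree_pos by simp

lemma min_degree_le_max_degree: "\<delta> \<le> \<Delta>"
  using degree_bounds[OF n_pos] by linarith

lemma degree_pos: "v < n \<Longrightarrow> 0 < real (degree E v)"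
  using degree_bounds[of v] one_le_min_degree by linarith

lemma transmission_prob_bounds: "v < n \<Longrightarrow> 0 \<le> q / real (degree E v) \<and> q / real (degree E v) \<le> 1"
  using degree_bounds[of v] one_le_min_degree q_pos q_le_1 by (auto simp: divide_le_eq_1)

lemma deg_in_nonneg: "0 \<le> deg_in S v"
  by (simp add: deg_in_def)

lemma deg_in_le_degree: "deg_in S v \<le> real (degree E v)"
  unfolding deg_in_def degree_def using card_mono[OF finite_nbrs, of "nbrs E v \<inter> S"] by auto

lemma deg_in_compl: "deg_in ({0..<n} - S) v = real (degree E v) - deg_in S v"
proof -
  have "nbrs E v = (nbrs E v \<inter> S) \<union> (nbrs E v \<inter> ({0..<n} - S))" using nbrs_subset[of v] by auto
  then have "card (nbrs E v) = card (nbrs E v \<inter> S) + card (nbrs E v \<inter> ({0..<n} - S))"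
    by (metis card_Un_disjoint finite_Int finite_nbrs Diff_disjoint inf_assoc inf_bot_right inf_left_commute)
  then show ?thesis unfolding deg_in_def degree_def by simp
qed

lemma stay_prob_eq:
  "stay_prob E q I u = (1 - pull_rate I u) * (\<Prod>v\<in>I \<inter> nbrs E u. 1 - q / real (degree E v))"
  unfolding stay_prob_def pull_rate_def deg_in_def by simp

lemma push_rate_le: "push_rate I u \<le> q * deg_in I u / \<delta>"
proof -
  have "push_rate I u \<le> (\<Sum>v\<in>I \<inter> nbrs E u. q / \<delta>)"
    unfolding push_rate_def
  proof (rule sum_mono)
    fix v assume "v \<in> I \<inter> nbrs E u"
    then have "v < n" using nbrs_subset[of u] by auto
    then show "q / real (degree E v) \<le> q / \<delta>"
      using degree_bounds one_le_min_degree q_pos degree_pos[of v] by (intro divide_left_mono mult_pos_pos) auto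
  qed
  then show ?thesis by (simp add: deg_in_def Int_commute mult.commute)
qed

lemma newly_informed_prob_bounds:
  assumes u: "u < n"
  shows "pull_rate I u + push_rate I u - 2 * (deg_in I u / \<delta>)\<^sup>2 \<le> 1 - stay_prob E q I u"
    and "1 - stay_prob E q I u \<le> pull_rate I u + push_rate I u"
proof -
  define x where "x = pull_rate I u"
  define S where "S = push_rate I u"
  define P where "P = (\<Prod>v\<in>I \<inter> nbrs E u. 1 - q / real (degree E v))"
  have b: "0 \<le> q / real (degree E v) \<and> q / real (degree E v) \<le> 1" if "v \<in> I \<inter> nbrs E u" for v
    using that nbrs_subset[of u] transmission_prob_bounds by auto
  have fin: "finite (I \<inter> nbrs E u)" using finite_nbrs by simp
  have P01: "0 \<le> P" "P \<le> 1" unfolding P_def using b by (auto intro: prod_nonneg prod_le_1)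
  have "q * deg_in I u \<le> real (degree E u)"
    using mult_left_le_one_le[OF deg_in_nonneg _ q_le_1, of I u] q_pos deg_in_le_degree[of I u] by simp
  then have x01: "0 \<le> x" "x \<le> 1"
    using deg_in_nonneg[of I u] degree_pos[OF u] q_pos
    unfolding x_def pull_rate_def by (auto simp: divide_le_eq_1)
  have S0: "0 \<le> S" unfolding S_def push_rate_def using b by (intro sum_nonneg) auto
  have qk: "q * deg_in I u \<le> deg_in I u" using mult_left_le_one_le[OF deg_in_nonneg _ q_le_1] q_pos by simp
  have "x \<le> deg_in I u / real (degree E u)"
    unfolding x_def pull_rate_def using qk degree_pos[OF u] by (intro divide_right_mono) auto
  also have "\<dots> \<le> deg_in I u / \<delta>"
    using degree_bounds[OF u] one_le_min_degree deg_in_nonneg by (intro divide_left_mono) auto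
  finally have k: "x \<le> deg_in I u / \<delta>" "S \<le> deg_in I u / \<delta>"
    using push_rate_le[of I u] divide_right_mono[OF qk, of \<delta>] one_le_min_degree unfolding S_def
    by auto
  have stay: "stay_prob E q I u = (1 - x) * P" unfolding stay_prob_eq x_def P_def ..
  have "1 - S \<le> P" unfolding P_def S_def push_rate_def by (rule prod_one_minus_ge[OF fin b])
  then show "1 - stay_prob E q I u \<le> x + S"
    unfolding stay using mult_left_mono[OF P01(2) x01(1)] by (simp add: algebra_simps)
  have "P \<le> 1 - S + S\<^sup>2 / 2" unfolding P_def S_def push_rate_def by (rule prod_one_minus_le[OF fin b])
  then have "(1 - x) * P \<le> (1 - x) * (1 - S + S\<^sup>2 / 2)" using x01 by (intro mult_left_mono) auto
  also have "\<dots> \<le> 1 - x - S + x * S + S\<^sup>2"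
    using x01 mult_left_mono[of "1 - x" 1 "S\<^sup>2 / 2"] by (simp add: algebra_simps)
  finally have "(1 - x) * P \<le> 1 - x - S + x * S + S\<^sup>2" .
  moreover have "x * S + S\<^sup>2 \<le> 2 * (deg_in I u / \<delta>)\<^sup>2"
    using mult_mono[OF k _ S0] power_mono[OF k(2) S0, of 2] deg_in_nonneg[of I u] one_le_min_degree
    by (simp add: power2_eq_square)
  ultimately show "x + S - 2 * (deg_in I u / \<delta>)\<^sup>2 \<le> 1 - stay_prob E q I u" unfolding stay by simp
qed

lemma pull_rate_bounds:
  assumes u: "u < n"
  shows "q / \<Delta> * deg_in I u \<le> pull_rate I u" "pull_rate I u \<le> q / \<delta> * deg_in I u"
  using degree_bounds[OF u] one_le_min_degree q_pos deg_in_nonneg[of I u]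
  unfolding pull_rate_def by (auto intro!: divide_left_mono mult_pos_pos simp: mult.commute)

lemma sum_deg_in_uninformed:
  assumes I: "I \<subseteq> {0..<n}"
  shows "(\<Sum>u\<in>{0..<n} - I. deg_in I u) = (\<Sum>v\<in>I. real (degree E v) - deg_in I v)"
proof -
  have "(\<Sum>u\<in>{0..<n} - I. deg_in I u) = (\<Sum>u\<in>{0..<n} - I. \<Sum>v\<in>I \<inter> nbrs E u. 1)"
    by (simp add: deg_in_def Int_commute)
  also have "\<dots> = (\<Sum>v\<in>I. deg_in ({0..<n} - I) v * 1)"
    unfolding deg_in_def using I finite_subset simple_graph_sym[OF simple]
    by (intro sum_nbrs_swap) auto
  finally show ?thesis by (simp add: deg_in_compl)
qed

lemma sum_push_rate_uninformed:
  assumes I: "I \<subseteq> {0..<n}"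
  shows "(\<Sum>u\<in>{0..<n} - I. push_rate I u)
    = q * real (card I) - q * (\<Sum>v\<in>I. deg_in I v / real (degree E v))"
proof -
  have "(\<Sum>u\<in>{0..<n} - I. push_rate I u) = (\<Sum>v\<in>I. deg_in ({0..<n} - I) v * (q / real (degree E v)))"
    unfolding push_rate_def deg_in_def using I finite_subset simple_graph_sym[OF simple]
    by (intro sum_nbrs_swap) auto
  also have "\<dots> = (\<Sum>v\<in>I. q - q * (deg_in I v / real (degree E v)))"
  proof (rule sum.cong[OF refl])
    fix v assume "v \<in> I"
    then have "0 < real (degree E v)" using I degree_pos by auto
    then show "deg_in ({0..<n} - I) v * (q / real (degree E v)) = q - q * (deg_in I v / real (degree E v))"
      by (simp add: deg_in_compl field_simps)
  qed
  finally show ?thesis by (simp add: sum_subtractf sum_distrib_left)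
qed

lemma sum_rates_bounds:
  assumes I: "I \<subseteq> {0..<n}"
  defines "s \<equiv> real (card I)" and "T \<equiv> (\<Sum>v\<in>I. deg_in I v)"
  shows "q / \<Delta> * (\<delta> * s - T) + (q * s - q * T / \<delta>) \<le> (\<Sum>u\<in>{0..<n} - I. pull_rate I u + push_rate I u)"
    and "(\<Sum>u\<in>{0..<n} - I. pull_rate I u + push_rate I u) \<le> q / \<delta> * (\<Delta> * s) + q * s"
proof -
  have "\<delta> * s \<le> (\<Sum>v\<in>I. real (degree E v))" "(\<Sum>v\<in>I. real (degree E v)) \<le> \<Delta> * s"
    using sum_mono[of I "\<lambda>_. \<delta>" "\<lambda>v. real (degree E v)"] sum_mono[of I "\<lambda>v. real (degree E v)" "\<lambda>_. \<Delta>"]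
      degree_bounds I unfolding s_def by (auto simp: subset_iff mult.commute)
  then have K: "\<delta> * s - T \<le> (\<Sum>u\<in>{0..<n} - I. deg_in I u)" "(\<Sum>u\<in>{0..<n} - I. deg_in I u) \<le> \<Delta> * s"
    using sum_nonneg[of I "deg_in I"] deg_in_nonneg
    unfolding sum_deg_in_uninformed[OF I] T_def by (auto simp: sum_subtractf)
  have pull: "q / \<Delta> * (\<Sum>u\<in>{0..<n} - I. deg_in I u) \<le> (\<Sum>u\<in>{0..<n} - I. pull_rate I u)"
    "(\<Sum>u\<in>{0..<n} - I. pull_rate I u) \<le> q / \<delta> * (\<Sum>u\<in>{0..<n} - I. deg_in I u)"
    using pull_rate_bounds by (auto simp: sum_distrib_left intro!: sum_mono)
  have "(\<Sum>v\<in>I. deg_in I v / real (degree E v)) \<le> (\<Sum>v\<in>I. deg_in I v / \<delta>)"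
  proof (rule sum_mono)
    fix v assume "v \<in> I"
    then have "v < n" using I by auto
    then show "deg_in I v / real (degree E v) \<le> deg_in I v / \<delta>"
      using degree_bounds degree_pos[of v] one_le_min_degree deg_in_nonneg
      by (intro divide_left_mono mult_pos_pos) auto
  qed
  then have "q * (\<Sum>v\<in>I. deg_in I v / real (degree E v)) \<le> q * T / \<delta>"
    using mult_left_mono[of _ _ q] q_pos unfolding T_def by (fastforce simp: sum_divide_distrib[symmetric])
  moreover have "0 \<le> q * (\<Sum>v\<in>I. deg_in I v / real (degree E v))"
    using q_pos deg_in_nonneg by (simp add: sum_nonneg)
  ultimately have push: "q * s - q * T / \<delta> \<le> (\<Sum>u\<in>{0..<n} - I. push_rate I u)"
    "(\<Sum>u\<in>{0..<n} - I. push_rate I u) \<le> q * s"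
    unfolding sum_push_rate_uninformed[OF I] s_def by linarith+
  have "q / \<Delta> * (\<delta> * s - T) \<le> q / \<Delta> * (\<Sum>u\<in>{0..<n} - I. deg_in I u)"
    "q / \<delta> * (\<Sum>u\<in>{0..<n} - I. deg_in I u) \<le> q / \<delta> * (\<Delta> * s)"
    using K q_pos by (intro mult_left_mono; simp)+
  then show "q / \<Delta> * (\<delta> * s - T) + (q * s - q * T / \<delta>) \<le> (\<Sum>u\<in>{0..<n} - I. pull_rate I u + push_rate I u)"
    and "(\<Sum>u\<in>{0..<n} - I. pull_rate I u + push_rate I u) \<le> q / \<delta> * (\<Delta> * s) + q * s"
    using pull push by (simp_all add: sum.distrib)
qed

lemma sum_sq_deg_in_bound:
  assumes "A \<subseteq> {0..<n}" and "(\<Sum>i<n. (deg_in S i)\<^sup>2) \<le> \<epsilon> * \<Delta>\<^sup>2 * real (card S)"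
  shows "(\<Sum>i\<in>A. (deg_in S i)\<^sup>2) \<le> \<epsilon> * \<Delta>\<^sup>2 * real (card S)"
  using sum_mono2[of "{..<n}" A "\<lambda>i. (deg_in S i)\<^sup>2"] assms by (auto simp: lessThan_atLeast0)

lemma sum_deg_in_bound:
  assumes A: "A \<subseteq> {0..<n}" and eps: "0 \<le> \<epsilon>"
    and K2: "(\<Sum>i<n. (deg_in S i)\<^sup>2) \<le> \<epsilon> * \<Delta>\<^sup>2 * real (card A)"
  shows "(\<Sum>i\<in>A. deg_in S i) \<le> sqrt \<epsilon> * \<Delta> * real (card A)"
proof -
  have "(\<Sum>i\<in>A. deg_in S i) \<le> sqrt (real (card A) * (\<Sum>i\<in>A. (deg_in S i)\<^sup>2))"
    using A finite_subset by (intro sum_le_sqrt_card_sum_sq) auto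
  also have "\<dots> \<le> sqrt (real (card A) * (\<epsilon> * \<Delta>\<^sup>2 * real (card A)))"
    using sum_mono2[of "{..<n}" A "\<lambda>i. (deg_in S i)\<^sup>2"] A K2
    by (auto simp: lessThan_atLeast0 intro!: mult_left_mono)
  also have "\<dots> = sqrt \<epsilon> * \<Delta> * real (card A)"
    using eps by (simp add: real_sqrt_mult power2_eq_square)
  finally show ?thesis .
qed

lemma sum_newly_informed_prob_bounds:
  assumes K2: "(\<Sum>i<n. (deg_in I i)\<^sup>2) \<le> \<epsilon> * \<Delta>\<^sup>2 * real (card I)"
  shows "(\<Sum>u\<in>{0..<n} - I. pull_rate I u + push_rate I u) - 2 * (\<epsilon> * (\<Delta> / \<delta>)\<^sup>2 * real (card I))
      \<le> (\<Sum>u\<in>{0..<n} - I. 1 - stay_prob E q I u)"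
    and "(\<Sum>u\<in>{0..<n} - I. 1 - stay_prob E q I u) \<le> (\<Sum>u\<in>{0..<n} - I. pull_rate I u + push_rate I u)"
proof -
  have "(\<Sum>u\<in>{0..<n} - I. pull_rate I u + push_rate I u) - 2 * ((\<Sum>u\<in>{0..<n} - I. (deg_in I u)\<^sup>2) / \<delta>\<^sup>2)
      = (\<Sum>u\<in>{0..<n} - I. pull_rate I u + push_rate I u - 2 * (deg_in I u / \<delta>)\<^sup>2)"
    by (simp add: sum_subtractf power_divide sum_divide_distrib sum_distrib_left)
  also have "\<dots> \<le> (\<Sum>u\<in>{0..<n} - I. 1 - stay_prob E q I u)"
    by (intro sum_mono newly_informed_prob_bounds(1)) auto
  finally show "(\<Sum>u\<in>{0..<n} - I. pull_rate I u + push_rate I u) - 2 * (\<epsilon> * (\<Delta> / \<delta>)\<^sup>2 * real (card I))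
      \<le> (\<Sum>u\<in>{0..<n} - I. 1 - stay_prob E q I u)"
    using divide_right_mono[OF sum_sq_deg_in_bound[OF _ K2, of "{0..<n} - I"], of "\<delta>\<^sup>2"]
    by (simp add: power_divide)
  show "(\<Sum>u\<in>{0..<n} - I. 1 - stay_prob E q I u) \<le> (\<Sum>u\<in>{0..<n} - I. pull_rate I u + push_rate I u)"
    by (intro sum_mono newly_informed_prob_bounds) auto
qed

lemma expected_newly_informed_close:
  assumes I: "I \<subseteq> {0..<n}" and eps: "0 \<le> \<epsilon>"
    and K2: "(\<Sum>i<n. (deg_in I i)\<^sup>2) \<le> \<epsilon> * \<Delta>\<^sup>2 * real (card I)"
  shows "\<bar>(\<Sum>u\<in>{0..<n} - I. 1 - stay_prob E q I u) - 2 * q * real (card I)\<bar>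
    \<le> real (card I) * ((\<Delta> / \<delta> - 1) + 2 * sqrt \<epsilon> * (\<Delta> / \<delta>) + 2 * \<epsilon> * (\<Delta> / \<delta>)\<^sup>2)"
proof -
  define s where "s = real (card I)"
  define T where "T = (\<Sum>v\<in>I. deg_in I v)"
  define r where "r = \<Delta> / \<delta>"
  define Ex where "Ex = (\<Sum>u\<in>{0..<n} - I. 1 - stay_prob E q I u)"
  have \<delta>: "1 \<le> \<delta>" "\<delta> \<le> \<Delta>" using one_le_min_degree min_degree_le_max_degree by auto
  have r1: "1 \<le> r" and s0: "0 \<le> s" unfolding r_def s_def using \<delta> by auto
  note lin = sum_newly_informed_prob_bounds[OF K2, folded s_def r_def Ex_def]
  note rates = sum_rates_bounds[OF I, folded s_def T_def]
  have "T / \<delta> \<le> sqrt \<epsilon> * \<Delta> * s / \<delta>"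
    using sum_deg_in_bound[OF I eps K2] \<delta> unfolding T_def s_def by (simp add: divide_right_mono)
  then have T: "T / \<delta> \<le> sqrt \<epsilon> * r * s" unfolding r_def by simp
  have T0: "0 \<le> T" unfolding T_def using deg_in_nonneg by (simp add: sum_nonneg)
  have "q / \<delta> * (\<Delta> * s) = q * s * r" unfolding r_def by simp
  moreover have "q * s * (r - 1) \<le> s * (r - 1)"
    using q_pos q_le_1 s0 r1 by (intro mult_right_mono) (auto simp: mult_left_le_one_le)
  ultimately have upper: "Ex - 2 * q * s \<le> s * (r - 1)" using rates(2) lin(2) by argo
  have "q / \<Delta> * (\<delta> * s - T) = q * s * (1 / r) - q * T / \<Delta>" unfolding r_def using \<delta> by (simp add: field_simps)
  moreover have "q * s * (1 - 1 / r) \<le> s * (r - 1)"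
  proof -
    have "1 - 1 / r \<le> r - 1"
      using r1 zero_le_power2[of "r - 1"] by (simp add: field_simps power2_eq_square)
    then show ?thesis
      using q_le_1 q_pos s0 r1 by (intro mult_mono) (auto simp: field_simps mult_left_le_one_le)
  qed
  moreover have "q * T / \<Delta> \<le> T / \<delta>" "q * T / \<delta> \<le> T / \<delta>"
    using q_le_1 q_pos T0 \<delta> by (auto simp: frac_le mult_left_le_one_le)
  ultimately have "2 * q * s - Ex \<le> s * (r - 1) + 2 * (sqrt \<epsilon> * r * s) + 2 * (\<epsilon> * r\<^sup>2 * s)"
    using rates(1) lin(1) T by (simp add: algebra_simps)
  moreover have "0 \<le> 2 * (sqrt \<epsilon> * r * s) + 2 * (\<epsilon> * r\<^sup>2 * s)" using eps r1 s0 by simp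
  moreover have "s * ((r - 1) + 2 * sqrt \<epsilon> * r + 2 * \<epsilon> * r\<^sup>2)
      = s * (r - 1) + 2 * (sqrt \<epsilon> * r * s) + 2 * (\<epsilon> * r\<^sup>2 * s)" by (simp add: algebra_simps)
  ultimately show ?thesis
    using upper unfolding Ex_def[symmetric] s_def[symmetric] r_def[symmetric] abs_le_iff by linarith
qed

lemma prod_nbrs_bounds:
  assumes u: "u < n"
  shows "(1 - q / \<delta>) ^ max_degree n E \<le> (\<Prod>v\<in>nbrs E u. 1 - q / real (degree E v))"
    and "(\<Prod>v\<in>nbrs E u. 1 - q / real (degree E v)) \<le> (1 - q / \<Delta>) ^ min_degree n E"
proof -
  have nb: "v < n" if "v \<in> nbrs E u" for v using that nbrs_subset[of u] by auto
  have a: "0 \<le> 1 - q / \<delta>" "1 - q / \<delta> \<le> 1" using q_pos q_le_1 one_le_min_degree by auto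
  have "(1 - q / \<delta>) ^ max_degree n E \<le> (1 - q / \<delta>) ^ degree E u"
    using degree_bounds[OF u] a by (intro power_decreasing) auto
  also have "\<dots> = (\<Prod>v\<in>nbrs E u. 1 - q / \<delta>)" by (simp add: degree_def)
  also have "\<dots> \<le> (\<Prod>v\<in>nbrs E u. 1 - q / real (degree E v))"
    using a degree_bounds[OF nb] degree_pos[OF nb] q_pos one_le_min_degree
    by (intro prod_mono) (auto intro!: divide_left_mono mult_pos_pos)
  finally show "(1 - q / \<delta>) ^ max_degree n E \<le> (\<Prod>v\<in>nbrs E u. 1 - q / real (degree E v))" .
  have b: "0 \<le> 1 - q / \<Delta>" "1 - q / \<Delta> \<le> 1"
    using q_pos q_le_1 one_le_min_degree min_degree_le_max_degree by auto
  have "(\<Prod>v\<in>nbrs E u. 1 - q / real (degree E v)) \<le> (\<Prod>v\<in>nbrs E u. 1 - q / \<Delta>)"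
    using transmission_prob_bounds[OF nb] degree_bounds[OF nb] degree_pos[OF nb] q_pos
      min_degree_le_max_degree one_le_min_degree
    by (intro prod_mono) (auto intro!: divide_left_mono mult_pos_pos)
  also have "\<dots> = (1 - q / \<Delta>) ^ degree E u" by (simp add: degree_def)
  also have "\<dots> \<le> (1 - q / \<Delta>) ^ min_degree n E"
    using degree_bounds[OF u] b by (intro power_decreasing) auto
  finally show "(\<Prod>v\<in>nbrs E u. 1 - q / real (degree E v)) \<le> (1 - q / \<Delta>) ^ min_degree n E" .
qed

lemma push_survival_gap:
  fixes I :: "nat set" and u :: nat
  defines "P \<equiv> (\<Prod>v\<in>I \<inter> nbrs E u. 1 - q / real (degree E v))"
    and "Q \<equiv> (\<Prod>v\<in>nbrs E u. 1 - q / real (degree E v))"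
  shows "0 \<le> P - Q" "P - Q \<le> deg_in ({0..<n} - I) u / \<delta>"
proof -
  define U where "U = {0..<n} - I"
  define R where "R = (\<Prod>v\<in>U \<inter> nbrs E u. 1 - q / real (degree E v))"
  have b: "0 \<le> q / real (degree E v) \<and> q / real (degree E v) \<le> 1" if "v \<in> A \<inter> nbrs E u" for A v
    using that nbrs_subset[of u] transmission_prob_bounds by auto
  have P01: "0 \<le> P" "P \<le> 1" and R1: "R \<le> 1" unfolding P_def R_def using b by (auto intro: prod_nonneg prod_le_1)
  have "nbrs E u = (I \<inter> nbrs E u) \<union> (U \<inter> nbrs E u)" "(I \<inter> nbrs E u) \<inter> (U \<inter> nbrs E u) = {}"
    using nbrs_subset[of u] unfolding U_def by auto
  then have QPR: "Q = P * R" unfolding Q_def P_def R_def by (metis finite_Int finite_nbrs prod.union_disjoint)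
  have "q * deg_in U u / \<delta> \<le> deg_in U u / \<delta>"
    using mult_left_le_one_le[OF deg_in_nonneg _ q_le_1, of U u] q_pos by (intro divide_right_mono) auto
  then have "1 - deg_in U u / \<delta> \<le> 1 - push_rate U u" using push_rate_le[of U u] by linarith
  also have "\<dots> \<le> R" unfolding R_def push_rate_def using b finite_nbrs by (intro prod_one_minus_ge) auto
  finally have "P * (1 - R) \<le> 1 * (deg_in U u / \<delta>)" using P01 R1 by (intro mult_mono) auto
  moreover have "0 \<le> P * (1 - R)" using P01 R1 by simp
  ultimately show "0 \<le> P - Q" "P - Q \<le> deg_in ({0..<n} - I) u / \<delta>"
    unfolding QPR U_def by (simp_all add: algebra_simps)
qed

lemma stay_prob_eq_pull_from_uninformed:
  assumes u: "u < n"
  shows "stay_prob E q I u = ((1 - q) + pull_rate ({0..<n} - I) u) * (\<Prod>v\<in>I \<inter> nbrs E u. 1 - q / real (degree E v))"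
proof -
  have "deg_in I u = real (degree E u) - deg_in ({0..<n} - I) u" using deg_in_compl[of I u] by simp
  moreover have "1 - q * (real (degree E u) - deg_in ({0..<n} - I) u) / real (degree E u)
      = (1 - q) + q * deg_in ({0..<n} - I) u / real (degree E u)"
    using degree_pos[OF u] by (simp add: field_simps)
  ultimately show ?thesis unfolding stay_prob_eq pull_rate_def by simp
qed

lemma stay_prob_close:
  assumes u: "u < n"
  defines "w \<equiv> \<bar>(1 - q / \<delta>) ^ max_degree n E - exp (- q)\<bar> + \<bar>(1 - q / \<Delta>) ^ min_degree n E - exp (- q)\<bar>"
  shows "\<bar>stay_prob E q I u - (1 - q) * exp (- q)\<bar> \<le> 2 * (deg_in ({0..<n} - I) u / \<delta>) + w"
proof -
  define m where "m = deg_in ({0..<n} - I) u"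
  define x where "x = pull_rate ({0..<n} - I) u"
  define P where "P = (\<Prod>v\<in>I \<inter> nbrs E u. 1 - q / real (degree E v))"
  define Q where "Q = (\<Prod>v\<in>nbrs E u. 1 - q / real (degree E v))"
  have P01: "0 \<le> P" "P \<le> 1"
    unfolding P_def using nbrs_subset[of u] transmission_prob_bounds by (auto intro!: prod_nonneg prod_le_1)
  have PQ: "\<bar>P - Q\<bar> \<le> m / \<delta>" using push_survival_gap[of I u] unfolding P_def Q_def m_def by simp
  have "\<bar>Q - exp (- q)\<bar> \<le> w" using prod_nbrs_bounds[OF u] unfolding Q_def w_def by linarith
  then have "\<bar>(1 - q) * ((P - Q) + (Q - exp (- q)))\<bar> \<le> 1 * (m / \<delta> + w)"
    using PQ q_pos q_le_1 abs_triangle_ineq[of "P - Q" "Q - exp (- q)"]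
    unfolding abs_mult by (intro mult_mono) auto
  moreover have "0 \<le> x" "x \<le> m / \<delta>"
  proof -
    have "0 \<le> q / \<Delta> * m" "q / \<delta> * m \<le> m / \<delta>"
      using q_pos q_le_1 deg_in_nonneg mult_left_le_one_le[of m q] unfolding m_def
      by (auto intro: divide_right_mono)
    then show "0 \<le> x" "x \<le> m / \<delta>"
      using pull_rate_bounds[OF u, of "{0..<n} - I"] unfolding x_def m_def by linarith+
  qed
  then have "\<bar>x * P\<bar> \<le> m / \<delta>" using P01 mult_mono[of x "m / \<delta>" P 1] by (simp add: abs_mult)
  moreover have "stay_prob E q I u - (1 - q) * exp (- q) = (1 - q) * ((P - Q) + (Q - exp (- q))) + x * P"
    unfolding stay_prob_eq_pull_from_uninformed[OF u] x_def P_def by (simp add: algebra_simps)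
  ultimately show ?thesis unfolding m_def by (smt (verit) abs_triangle_ineq)
qed

lemma expected_uninformed_close:
  assumes eps: "0 \<le> \<epsilon>"
    and K2: "(\<Sum>i<n. (deg_in ({0..<n} - I) i)\<^sup>2) \<le> \<epsilon> * \<Delta>\<^sup>2 * real (card ({0..<n} - I))"
  defines "w \<equiv> \<bar>(1 - q / \<delta>) ^ max_degree n E - exp (- q)\<bar> + \<bar>(1 - q / \<Delta>) ^ min_degree n E - exp (- q)\<bar>"
  shows "\<bar>(\<Sum>u\<in>{0..<n} - I. stay_prob E q I u) - exp (- q) * (1 - q) * real (card ({0..<n} - I))\<bar>
    \<le> real (card ({0..<n} - I)) * (2 * sqrt \<epsilon> * (\<Delta> / \<delta>) + w)"
proof -
  define U where "U = {0..<n} - I"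
  define s where "s = real (card U)"
  have "\<bar>(\<Sum>u\<in>U. stay_prob E q I u) - exp (- q) * (1 - q) * s\<bar>
      = \<bar>\<Sum>u\<in>U. stay_prob E q I u - (1 - q) * exp (- q)\<bar>"
    unfolding s_def by (simp add: sum_subtractf mult_ac)
  also have "\<dots> \<le> (\<Sum>u\<in>U. 2 * (deg_in U u / \<delta>) + w)"
    using stay_prob_close unfolding U_def w_def by (intro order_trans[OF sum_abs] sum_mono) auto
  also have "\<dots> = 2 / \<delta> * (\<Sum>u\<in>U. deg_in U u) + w * s"
    unfolding s_def by (simp add: sum.distrib sum_distrib_left sum_divide_distrib)
  also have "\<dots> \<le> 2 / \<delta> * (sqrt \<epsilon> * \<Delta> * s) + w * s"
    using sum_deg_in_bound[of U \<epsilon> U] eps K2 unfolding U_def s_def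
    by (intro add_right_mono mult_left_mono) auto
  finally show ?thesis unfolding U_def[symmetric] s_def[symmetric] by (simp add: algebra_simps)
qed

end

section \<open>Small sets in graphs with a spectral gap\<close>

lemma connected_graph_min_degree_pos:
  assumes C: "connected_graph_on n E" and n2: "2 \<le> n"
  shows "1 \<le> min_degree n E"
proof -
  have G: "simple_graph_on n E" using C unfolding connected_graph_on_def by blast
  have "degree E v > 0" if v: "v < n" for v
  proof -
    define u where "u = (if v = 0 then 1 else (0::nat))"
    have u: "u < n" "u \<noteq> v" unfolding u_def using n2 v by auto
    have "E\<^sup>*\<^sup>* v u" using C v u unfolding connected_graph_on_def by blast
    then have "nbrs E v \<noteq> {}"
      using u(2) by (cases rule: converse_rtranclpE) (auto simp: nbrs_def)
    then show ?thesis
      unfolding degree_def using simple_graph_finite_nbrs[OF G] by (simp add: card_gt_0_iff)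
  qed
  moreover have "min_degree n E \<in> degree E ` {0..<n}"
    unfolding min_degree_def by (rule Min_in) (use n2 in auto)
  ultimately show ?thesis by (force simp: Suc_le_eq)
qed

lemma connected_push_pull_graph:
  assumes "connected_graph_on n E" "2 \<le> n" "0 < q" "q \<le> 1"
  shows "push_pull_graph n E q"
  using assms connected_graph_min_degree_pos[OF assms(1,2)]
  by unfold_locales (auto simp: connected_graph_on_def)

definition spectral_error :: "nat \<Rightarrow> real \<Rightarrow> real \<Rightarrow> real \<Rightarrow> real" where
  "spectral_error n \<delta> \<Delta> lm = 2 * ((\<Delta> - \<delta>) / (\<Delta> - lm)) + 2 / ln (real n) + (lm / \<Delta>)\<^sup>2"

context push_pull_graph
begin

abbreviation \<epsilon> where "\<epsilon> \<equiv> spectral_error n \<delta> \<Delta> (second_eig n E)"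

lemma sum_sq_deg_in_small_set:
  assumes n2: "2 \<le> n" and gap: "second_eig n E < \<delta>"
    and S: "S \<subseteq> {0..<n}" and small: "real (card S) \<le> real n / ln (real n)"
  shows "0 \<le> \<epsilon>" and "(\<Sum>i<n. (deg_in S i)\<^sup>2) \<le> \<epsilon> * \<Delta>\<^sup>2 * real (card S)"
proof -
  define s where "s = real (card S)"
  define \<tau> where "\<tau> = (\<Delta> - \<delta>) / (\<Delta> - second_eig n E)"
  have \<delta>: "1 \<le> \<delta>" "\<delta> \<le> \<Delta>" using one_le_min_degree min_degree_le_max_degree by auto
  have ln: "0 < ln (real n)" using n2 by simp
  show "0 \<le> \<epsilon>" unfolding spectral_error_def using \<delta> gap ln by simp
  obtain \<phi> where "adjacency_eigenbasis n E \<phi>" using adjacency_eigenbasis_exists[OF simple n2] .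
  then have "(\<Sum>i<n. (deg_in S i)\<^sup>2) \<le> \<Delta>\<^sup>2 * (2 * s * \<tau> + 2 * s\<^sup>2 / real n) + (second_eig n E)\<^sup>2 * s"
    using adjacency_eigenbasis.sum_sq_card_nbrs_inter_le[of n E \<phi> S] gap S[unfolded atLeast0LessThan]
    unfolding deg_in_def s_def \<tau>_def by auto
  also have "s\<^sup>2 / real n \<le> s / ln (real n)"
  proof -
    have "s * (s / real n) \<le> s * (1 / ln (real n))"
      using small ln n2 unfolding s_def by (intro mult_left_mono) (auto simp: field_simps)
    then show ?thesis by (simp add: power2_eq_square)
  qed
  then have "\<Delta>\<^sup>2 * (2 * s * \<tau> + 2 * s\<^sup>2 / real n) + (second_eig n E)\<^sup>2 * s
      \<le> \<Delta>\<^sup>2 * (2 * s * \<tau> + 2 * (s / ln (real n))) + (second_eig n E)\<^sup>2 * s"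
    by (intro add_right_mono mult_left_mono) auto
  also have "\<dots> = \<epsilon> * \<Delta>\<^sup>2 * s"
    unfolding spectral_error_def \<tau>_def using \<delta> by (simp add: field_simps power2_eq_square)
  finally show "(\<Sum>i<n. (deg_in S i)\<^sup>2) \<le> \<epsilon> * \<Delta>\<^sup>2 * real (card S)" unfolding s_def .
qed

lemma expected_newly_informed_error:
  assumes n2: "2 \<le> n" and gap: "second_eig n E < \<delta>"
    and I: "I \<subseteq> {0..<n}" and small: "real (card I) \<le> real n / ln (real n)"
  shows "\<bar>measure_pmf.expectation (pp_next n E q I) (\<lambda>J. real (card (J - I))) - 2 * q * real (card I)\<bar>
    \<le> real (card I) * ((\<Delta> / \<delta> - 1) + 2 * sqrt \<epsilon> * (\<Delta> / \<delta>) + 2 * \<epsilon> * (\<Delta> / \<delta>)\<^sup>2)"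
  using expected_newly_informed_close[OF I sum_sq_deg_in_small_set[OF n2 gap I small]]
  unfolding expectation_card_newly_informed[OF I] .

lemma expected_uninformed_error:
  assumes n2: "2 \<le> n" and gap: "second_eig n E < \<delta>"
    and I: "I \<subseteq> {0..<n}" and small: "real (card ({0..<n} - I)) \<le> real n / ln (real n)"
  shows "\<bar>measure_pmf.expectation (pp_next n E q I) (\<lambda>J. real (card ({0..<n} - J)))
      - exp (- q) * (1 - q) * real (card ({0..<n} - I))\<bar>
    \<le> real (card ({0..<n} - I)) * (2 * sqrt \<epsilon> * (\<Delta> / \<delta>)
      + (\<bar>(1 - q / \<delta>) ^ max_degree n E - exp (- q)\<bar> + \<bar>(1 - q / \<Delta>) ^ min_degree n E - exp (- q)\<bar>))"
  using expected_uninformed_close[OF sum_sq_deg_in_small_set[OF n2 gap _ small]]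
  unfolding expectation_card_uninformed[OF I] by blast

end

section \<open>Expander sequences\<close>

lemma tendsto_mult_ln_one_minus:
  fixes f :: "'a \<Rightarrow> real"
  assumes f: "filterlim f at_top F" and q: "0 < q" "q \<le> 1"
  shows "((\<lambda>x. f x * ln (1 - q / f x)) \<longlongrightarrow> - q) F"
proof (rule real_tendsto_sandwich)
  have ev: "eventually (\<lambda>x. 2 \<le> f x) F" using f by (simp add: filterlim_at_top)
  show "((\<lambda>x. - q - 2 * q\<^sup>2 * inverse (f x)) \<longlongrightarrow> - q) F"
    using tendsto_diff[OF tendsto_const tendsto_mult[OF tendsto_const tendsto_inverse_0_at_top[OF f]],
        of "- q" "2 * q\<^sup>2"] by simp
  show "((\<lambda>x. - q) \<longlongrightarrow> - q) F" by simp
  show "eventually (\<lambda>x. - q - 2 * q\<^sup>2 * inverse (f x) \<le> f x * ln (1 - q / f x)) F"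
    using ev
  proof eventually_elim
    case (elim x)
    have "0 \<le> q / f x" "q / f x \<le> 1 / 2" using elim q by (auto simp: field_simps)
    then have "f x * (- (q / f x) - 2 * (q / f x)\<^sup>2) \<le> f x * ln (1 - q / f x)"
      using ln_one_minus_pos_lower_bound elim by (intro mult_left_mono) auto
    moreover have "f x * (- (q / f x) - 2 * (q / f x)\<^sup>2) = - q - 2 * q\<^sup>2 * inverse (f x)"
      using elim by (simp add: field_simps power2_eq_square)
    ultimately show ?case by simp
  qed
  show "eventually (\<lambda>x. f x * ln (1 - q / f x) \<le> - q) F"
    using ev
  proof eventually_elim
    case (elim x)
    have "0 \<le> q / f x" "q / f x < 1" using elim q by (auto simp: field_simps)
    then have "f x * ln (1 - q / f x) \<le> f x * (- (q / f x))"
      using ln_one_minus_pos_upper_bound elim by (intro mult_left_mono) auto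
    then show ?case using elim by simp
  qed
qed

lemma tendsto_one_minus_power_exp:
  fixes f g :: "'a \<Rightarrow> real" and k :: "'a \<Rightarrow> nat"
  assumes f: "filterlim f at_top F" and g: "(g \<longlongrightarrow> 1) F" and q: "0 < q" "q \<le> 1"
    and k: "eventually (\<lambda>x. real (k x) = f x * g x) F"
  shows "((\<lambda>x. (1 - q / f x) ^ k x) \<longlongrightarrow> exp (- q)) F"
proof -
  have "((\<lambda>x. exp (g x * (f x * ln (1 - q / f x)))) \<longlongrightarrow> exp (1 * - q)) F"
    by (intro tendsto_exp tendsto_mult g tendsto_mult_ln_one_minus[OF f q])
  moreover have "eventually (\<lambda>x. exp (g x * (f x * ln (1 - q / f x))) = (1 - q / f x) ^ k x) F"
    using k f[unfolded filterlim_at_top, rule_format, of 2]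
  proof eventually_elim
    case (elim x)
    then have "0 < 1 - q / f x" using q by (auto simp: field_simps)
    then show ?case using elim by (simp add: powr_realpow[symmetric] powr_def mult_ac)
  qed
  ultimately show ?thesis by (simp add: tendsto_cong)
qed

lemma expectation_pmf_bounds:
  fixes f :: "'b \<Rightarrow> real"
  assumes "\<And>x. 0 \<le> f x" "\<And>x. f x \<le> c"
  shows "0 \<le> measure_pmf.expectation p f" "measure_pmf.expectation p f \<le> c"
proof -
  have "integrable (measure_pmf p) f"
    by (rule measure_pmf.integrable_const_bound[where B = c]) (use assms in \<open>auto intro: order_trans\<close>)
  then show "0 \<le> measure_pmf.expectation p f" "measure_pmf.expectation p f \<le> c"
    using assms by (auto intro: integral_nonneg_AE measure_pmf.integral_le_const)
qed

lemma vanishing_relative_error: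
  fixes f g :: "nat \<Rightarrow> 'a \<Rightarrow> real"
  assumes err: "err \<longlonglongrightarrow> 0"
    and eventual: "eventually (\<lambda>n. \<forall>x. P n x \<longrightarrow> \<bar>f n x\<bar> \<le> err n * g n x) sequentially"
    and crude: "\<And>n x. P n x \<Longrightarrow> \<bar>f n x\<bar> \<le> C n * g n x"
    and g: "\<And>n x. 0 \<le> g n x"
  shows "\<exists>e. e \<longlonglongrightarrow> 0 \<and> (\<forall>n x. P n x \<longrightarrow> \<bar>f n x\<bar> \<le> \<bar>e n\<bar> * g n x)"
proof -
  obtain N where N: "\<And>n x. N \<le> n \<Longrightarrow> P n x \<Longrightarrow> \<bar>f n x\<bar> \<le> err n * g n x"
    using eventual unfolding eventually_sequentially by blast
  define e where "e n = (if n < N then C n else err n)" for n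
  have "eventually (\<lambda>n. err n = e n) sequentially"
    unfolding e_def eventually_sequentially by (intro exI[of _ N]) auto
  then have "e \<longlonglongrightarrow> 0" using err by (rule Lim_transform_eventually[rotated])
  moreover have "\<bar>f n x\<bar> \<le> \<bar>e n\<bar> * g n x" if "P n x" for n x
    using N[OF _ that] crude[OF that] g[of n x] mult_right_mono[OF abs_ge_self, of "g n x"]
    unfolding e_def by (cases "n < N") (force intro: order_trans)+
  ultimately show ?thesis by blast
qed

lemma newly_informed_crude_bound:
  assumes I: "I \<subseteq> {0..<n}" and q: "0 \<le> q" "q \<le> 1"
  shows "\<bar>measure_pmf.expectation (pp_next n E q I) (\<lambda>J. real (card (J - I))) - 2 * q * real (card I)\<bar>
    \<le> (real n + 2) * real (card I)"
proof (cases "I = {}")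
  case True
  then have "pp_step n I \<omega> - I = {}" for \<omega> unfolding pp_step_def by auto
  then show ?thesis using True by (simp add: pp_next_def)
next
  case False
  then have s1: "1 \<le> real (card I)" using I finite_subset by (fastforce simp: Suc_le_eq card_gt_0_iff)
  have "card (pp_step n I \<omega> - I) \<le> n" for \<omega>
    using card_mono[of "{0..<n}" "pp_step n I \<omega> - I"] unfolding pp_step_def by fastforce
  then have "0 \<le> measure_pmf.expectation (pp_next n E q I) (\<lambda>J. real (card (J - I)))"
    and "measure_pmf.expectation (pp_next n E q I) (\<lambda>J. real (card (J - I))) \<le> real n"
    unfolding pp_next_def integral_map_pmf by (auto intro!: expectation_pmf_bounds)
  moreover have "0 \<le> q * real (card I)" "q * real (card I) \<le> real (card I)"
    using q by (simp_all add: mult_left_le_one_le)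
  moreover have "real n \<le> real n * real (card I)" using s1 by (simp add: mult_le_cancel_left1)
  ultimately show ?thesis unfolding abs_le_iff distrib_right by linarith
qed

lemma uninformed_crude_bound:
  assumes q: "0 \<le> q" "q \<le> 1"
  shows "\<bar>measure_pmf.expectation (pp_next n E q I) (\<lambda>J. real (card ({0..<n} - J)))
      - exp (- q) * (1 - q) * real (card ({0..<n} - I))\<bar> \<le> 1 * real (card ({0..<n} - I))"
proof -
  have "card ({0..<n} - pp_step n I \<omega>) \<le> card ({0..<n} - I)" for \<omega>
    by (rule card_mono) (auto simp: pp_step_def)
  then have "0 \<le> measure_pmf.expectation (pp_next n E q I) (\<lambda>J. real (card ({0..<n} - J)))"
    "measure_pmf.expectation (pp_next n E q I) (\<lambda>J. real (card ({0..<n} - J))) \<le> real (card ({0..<n} - I))"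
    unfolding pp_next_def integral_map_pmf by (auto intro!: expectation_pmf_bounds)
  moreover have "0 \<le> exp (- q) * (1 - q)" "exp (- q) * (1 - q) \<le> 1"
    using q by (auto intro: mult_le_one)
  ultimately show ?thesis
    using mult_left_le_one_le[of "real (card ({0..<n} - I))" "exp (- q) * (1 - q)"]
      mult_nonneg_nonneg[of "exp (- q) * (1 - q)" "real (card ({0..<n} - I))"]
    unfolding abs_le_iff by linarith
qed

context
  fixes G :: "nat \<Rightarrow> nat \<Rightarrow> nat \<Rightarrow> bool"
  assumes expander: "expander_seq G"
begin

lemma expander_simple_graph: "0 < n \<Longrightarrow> simple_graph_on n (G n)"
  using expander unfolding expander_seq_def connected_graph_on_def by auto

lemma expander_push_pull_graph: "2 \<le> n \<Longrightarrow> 0 < q \<Longrightarrow> q \<le> 1 \<Longrightarrow> push_pull_graph n (G n) q"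
  using expander connected_push_pull_graph unfolding expander_seq_def by auto

lemma expander_degree_ratio: "(\<lambda>n. real (max_degree n (G n)) / real (min_degree n (G n))) \<longlonglongrightarrow> 1"
  and expander_eig_ratio: "(\<lambda>n. second_eig n (G n) / real (max_degree n (G n))) \<longlonglongrightarrow> 0"
  using expander unfolding expander_seq_def by auto

lemma expander_degrees:
  assumes "2 \<le> n"
  shows "1 \<le> real (min_degree n (G n))" "real (min_degree n (G n)) \<le> real (max_degree n (G n))"
  using push_pull_graph.one_le_min_degree push_pull_graph.min_degree_le_max_degree
    expander_push_pull_graph[OF assms, of 1] by auto

lemma expander_eventually_gap:
  "eventually (\<lambda>n. 2 \<le> n \<and> second_eig n (G n) < real (min_degree n (G n))) sequentially"
proof -
  have "eventually (\<lambda>n. second_eig n (G n) / real (max_degree n (G n))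
      * (real (max_degree n (G n)) / real (min_degree n (G n))) < 1) sequentially"
    using tendsto_mult[OF expander_eig_ratio expander_degree_ratio] by (rule order_tendstoD) simp
  then show ?thesis
    using eventually_ge_at_top[of 2]
  proof eventually_elim
    case (elim n)
    then show ?case using expander_degrees[of n] by (simp add: field_simps)
  qed
qed

lemma expander_min_degree_at_top: "filterlim (\<lambda>n. real (min_degree n (G n))) at_top sequentially"
proof -
  define r where "r n = real (max_degree n (G n)) / real (min_degree n (G n))" for n
  define l where "l n = second_eig n (G n) / real (max_degree n (G n))" for n
  define z where "z n = (r n)\<^sup>2 * inverse (real n) + (l n)\<^sup>2 * (r n)\<^sup>2" for n
  have "r \<longlonglongrightarrow> 1" "l \<longlonglongrightarrow> 0"
    unfolding r_def l_def by (rule expander_degree_ratio expander_eig_ratio)+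
  then have "z \<longlonglongrightarrow> 1\<^sup>2 * 0 + 0\<^sup>2 * 1\<^sup>2"
    unfolding z_def by (intro tendsto_intros lim_inverse_n)
  then have z0: "z \<longlonglongrightarrow> 0" by simp
  have "eventually (\<lambda>n. 0 < z n \<and> 1 \<le> real (min_degree n (G n)) * z n) sequentially"
    using expander_eventually_gap
  proof eventually_elim
    case (elim n)
    then have n2: "2 \<le> n" and gap: "second_eig n (G n) < real (min_degree n (G n))" by auto
    note d = expander_degrees[OF n2]
    obtain \<phi> where "adjacency_eigenbasis n (G n) \<phi>"
      using adjacency_eigenbasis_exists[OF expander_simple_graph n2] n2 by auto
    then have "real n * real (min_degree n (G n)) * 1
        \<le> (real (max_degree n (G n)))\<^sup>2 + real n * (second_eig n (G n))\<^sup>2"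
      by (simp add: adjacency_eigenbasis.min_degree_le_sum_sq_eigenvalues)
    also have "\<dots> = real n * real (min_degree n (G n)) * (real (min_degree n (G n)) * z n)"
      using d n2 unfolding z_def r_def l_def by (simp add: field_simps power2_eq_square)
    finally have "1 \<le> real (min_degree n (G n)) * z n"
      using d n2 by (simp add: mult_le_cancel_left_pos)
    moreover have "0 < z n" using d n2 unfolding z_def r_def by (intro add_pos_nonneg) auto
    ultimately show ?case by simp
  qed
  then have "eventually (\<lambda>n. inverse (z n) \<le> real (min_degree n (G n))) sequentially"
    by eventually_elim (simp add: field_simps)
  moreover have "filterlim (\<lambda>n. inverse (z n)) at_top sequentially"
    using \<open>eventually (\<lambda>n. 0 < z n \<and> _) sequentially\<close>
    by (intro filterlim_inverse_at_top[OF z0]) (auto elim: eventually_mono)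
  ultimately show ?thesis by (rule filterlim_at_top_mono[rotated])
qed

lemma expander_spectral_error_tendsto_0:
  "(\<lambda>n. spectral_error n (real (min_degree n (G n))) (real (max_degree n (G n))) (second_eig n (G n)))
    \<longlonglongrightarrow> 0"
proof -
  define r where "r n = real (max_degree n (G n)) / real (min_degree n (G n))" for n
  define l where "l n = second_eig n (G n) / real (max_degree n (G n))" for n
  have "filterlim (\<lambda>n. ln (real n)) at_top sequentially"
    by (rule filterlim_compose[OF ln_at_top filterlim_real_sequentially])
  then have "(\<lambda>n. 2 / ln (real n)) \<longlonglongrightarrow> 0"
    by (intro tendsto_divide_0[OF tendsto_const] filterlim_at_top_imp_at_infinity)
  moreover have "r \<longlonglongrightarrow> 1" "l \<longlonglongrightarrow> 0"
    unfolding r_def l_def by (rule expander_degree_ratio expander_eig_ratio)+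
  ultimately have "(\<lambda>n. 2 * ((r n - 1) / (r n - l n * r n)) + 2 / ln (real n) + (l n)\<^sup>2)
      \<longlonglongrightarrow> 2 * ((1 - 1) / (1 - 0 * 1)) + 0 + 0\<^sup>2"
    by (intro tendsto_intros) auto
  moreover have "eventually (\<lambda>n. 2 * ((r n - 1) / (r n - l n * r n)) + 2 / ln (real n) + (l n)\<^sup>2
      = spectral_error n (real (min_degree n (G n))) (real (max_degree n (G n))) (second_eig n (G n)))
      sequentially"
    using eventually_ge_at_top[of 2]
  proof eventually_elim
    case (elim n)
    note d = expander_degrees[OF elim]
    have "r n - 1 = (real (max_degree n (G n)) - real (min_degree n (G n))) / real (min_degree n (G n))"
      "r n - l n * r n = (real (max_degree n (G n)) - second_eig n (G n)) / real (min_degree n (G n))"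
      using d unfolding r_def l_def by (simp_all add: field_simps)
    then show ?case using d unfolding spectral_error_def l_def by simp
  qed
  ultimately show ?thesis by (simp add: tendsto_cong)
qed

lemma expander_expected_newly_informed:
  assumes q: "0 < q" "q \<le> 1"
  shows "\<exists>e. e \<longlonglongrightarrow> 0 \<and> (\<forall>n I. I \<subseteq> {0..<n} \<and> real (card I) \<le> real n / ln (real n) \<longrightarrow>
    \<bar>measure_pmf.expectation (pp_next n (G n) q I) (\<lambda>J. real (card (J - I))) - 2 * q * real (card I)\<bar>
      \<le> \<bar>e n\<bar> * real (card I))"
proof -
  define r where "r n = real (max_degree n (G n)) / real (min_degree n (G n))" for n
  define \<epsilon> where "\<epsilon> n = spectral_error n (real (min_degree n (G n))) (real (max_degree n (G n)))
    (second_eig n (G n))" for n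
  have "(\<lambda>n. (r n - 1) + 2 * sqrt (\<epsilon> n) * r n + 2 * \<epsilon> n * (r n)\<^sup>2)
      \<longlonglongrightarrow> (1 - 1) + 2 * sqrt 0 * 1 + 2 * 0 * 1\<^sup>2"
    unfolding r_def \<epsilon>_def by (intro tendsto_intros expander_degree_ratio expander_spectral_error_tendsto_0)
  moreover have "eventually (\<lambda>n. \<forall>I. I \<subseteq> {0..<n} \<and> real (card I) \<le> real n / ln (real n) \<longrightarrow>
    \<bar>measure_pmf.expectation (pp_next n (G n) q I) (\<lambda>J. real (card (J - I))) - 2 * q * real (card I)\<bar>
      \<le> ((r n - 1) + 2 * sqrt (\<epsilon> n) * r n + 2 * \<epsilon> n * (r n)\<^sup>2) * real (card I)) sequentially"
    using expander_eventually_gap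
    by eventually_elim (use push_pull_graph.expected_newly_informed_error[OF expander_push_pull_graph[OF _ q]]
      in \<open>auto simp: r_def \<epsilon>_def mult.commute\<close>)
  ultimately show ?thesis
    using newly_informed_crude_bound q by (intro vanishing_relative_error[where C = "\<lambda>n. real n + 2"]) auto
qed

lemma expander_expected_uninformed:
  assumes q: "0 < q" "q \<le> 1"
  shows "\<exists>e. e \<longlonglongrightarrow> 0 \<and> (\<forall>n I. I \<subseteq> {0..<n} \<and> real (card ({0..<n} - I)) \<le> real n / ln (real n) \<longrightarrow>
    \<bar>measure_pmf.expectation (pp_next n (G n) q I) (\<lambda>J. real (card ({0..<n} - J)))
      - exp (- q) * (1 - q) * real (card ({0..<n} - I))\<bar> \<le> \<bar>e n\<bar> * real (card ({0..<n} - I)))"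
proof -
  define \<delta> where "\<delta> n = real (min_degree n (G n))" for n
  define \<Delta> where "\<Delta> n = real (max_degree n (G n))" for n
  define \<epsilon> where "\<epsilon> n = spectral_error n (\<delta> n) (\<Delta> n) (second_eig n (G n))" for n
  have r: "(\<lambda>n. \<Delta> n / \<delta> n) \<longlonglongrightarrow> 1" unfolding \<Delta>_def \<delta>_def by (rule expander_degree_ratio)
  have \<delta>: "filterlim \<delta> at_top sequentially" unfolding \<delta>_def by (rule expander_min_degree_at_top)
  have d: "eventually (\<lambda>n. 1 \<le> \<delta> n \<and> \<delta> n \<le> \<Delta> n) sequentially"
    unfolding eventually_sequentially \<delta>_def \<Delta>_def using expander_degrees by blast
  then have \<Delta>: "filterlim \<Delta> at_top sequentially"
    by (intro filterlim_at_top_mono[OF \<delta>]) (auto elim: eventually_mono)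
  have "((\<lambda>n. (1 - q / \<delta> n) ^ max_degree n (G n)) \<longlongrightarrow> exp (- q)) sequentially"
    using \<delta> r q by (rule tendsto_one_minus_power_exp) (use d in \<open>auto elim!: eventually_mono simp: \<Delta>_def\<close>)
  moreover have "((\<lambda>n. (1 - q / \<Delta> n) ^ min_degree n (G n)) \<longlongrightarrow> exp (- q)) sequentially"
    using \<Delta> tendsto_inverse[OF r, simplified] q by (rule tendsto_one_minus_power_exp)
      (use d in \<open>auto elim!: eventually_mono simp: \<delta>_def\<close>)
  ultimately have "(\<lambda>n. 2 * sqrt (\<epsilon> n) * (\<Delta> n / \<delta> n) + (\<bar>(1 - q / \<delta> n) ^ max_degree n (G n) - exp (- q)\<bar>
      + \<bar>(1 - q / \<Delta> n) ^ min_degree n (G n) - exp (- q)\<bar>))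
      \<longlonglongrightarrow> 2 * sqrt 0 * 1 + (\<bar>exp (- q) - exp (- q)\<bar> + \<bar>exp (- q) - exp (- q)\<bar>)"
    unfolding \<epsilon>_def \<delta>_def \<Delta>_def
    by (intro tendsto_intros expander_degree_ratio expander_spectral_error_tendsto_0)
  moreover have "eventually (\<lambda>n. \<forall>I. I \<subseteq> {0..<n} \<and> real (card ({0..<n} - I)) \<le> real n / ln (real n) \<longrightarrow>
    \<bar>measure_pmf.expectation (pp_next n (G n) q I) (\<lambda>J. real (card ({0..<n} - J)))
      - exp (- q) * (1 - q) * real (card ({0..<n} - I))\<bar>
      \<le> (2 * sqrt (\<epsilon> n) * (\<Delta> n / \<delta> n) + (\<bar>(1 - q / \<delta> n) ^ max_degree n (G n) - exp (- q)\<bar>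
      + \<bar>(1 - q / \<Delta> n) ^ min_degree n (G n) - exp (- q)\<bar>)) * real (card ({0..<n} - I))) sequentially"
    using expander_eventually_gap
    by eventually_elim (use push_pull_graph.expected_uninformed_error[OF expander_push_pull_graph[OF _ q]]
      in \<open>auto simp: \<delta>_def \<Delta>_def \<epsilon>_def mult.commute\<close>)
  ultimately show ?thesis
    using uninformed_crude_bound q by (intro vanishing_relative_error[where C = "\<lambda>_. 1"]) auto
qed

end

theorem lemma3p4:
  fixes G :: "nat \<Rightarrow> nat \<Rightarrow> nat \<Rightarrow> bool" and q :: real
  assumes "expander_seq G" and "0 < q" and "q \<le> 1"
  shows
    "(\<exists>e :: nat \<Rightarrow> real. e \<longlonglongrightarrow> 0 \<and>
       (\<forall>n I. I \<subseteq> {0..<n} \<and> real (card I) \<le> real n / ln (real n) \<longrightarrow>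
          \<bar>measure_pmf.expectation (pp_next n (G n) q I) (\<lambda>J. real (card (J - I)))
             - 2 * q * real (card I)\<bar> \<le> \<bar>e n\<bar> * real (card I))) \<and>
     (\<exists>e :: nat \<Rightarrow> real. e \<longlonglongrightarrow> 0 \<and>
       (\<forall>n I. I \<subseteq> {0..<n} \<and> real (card ({0..<n} - I)) \<le> real n / ln (real n) \<longrightarrow>
          \<bar>measure_pmf.expectation (pp_next n (G n) q I) (\<lambda>J. real (card ({0..<n} - J)))
             - exp (- q) * (1 - q) * real (card ({0..<n} - I))\<bar>
            \<le> \<bar>e n\<bar> * real (card ({0..<n} - I))))"
  using expander_expected_newly_informed[OF assms] expander_expected_uninformed[OF assms] by blast

end
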